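(* Let $\mathcal{G}=(\mathcal{V},\mathcal{E})$ be a finite connected graph with an arbitrary orientation and incidence matrix $\Omega$, and let $q\ge1$. Then $V_q$ is a metric on $\mathcal{P}(\mathcal{V})$: it is nonnegative, satisfies $V_q(\mu,\nu)=0$ iff $\mu=\nu$, is symmetric, and satisfies the triangle inequality.
   Context: For a finite graph whose edges have been given an orientation, each edge $k$ goes from $\lfloor k\rfloor$ to $\lceil k\rceil$. The incidence matrix $\Omega=(\omega_{x,k})$ has $\omega_{x,k}=1$ if $x=\lceil k\rceil$, $\omega_{x,k}=-1$ if $x=\lfloor k\rfloor$, and $0$ otherwise. $\mathcal{P}(\mathcal{V})$ and $\mathcal{P}(\mathcal{E})$ denote probability vectors on $\mathcal{V}$ and on $\mathcal{E}$. A triple $(f,v,g)$ consists of an absolutely continuous $f:[0,1]\to\mathcal{P}(\mathcal{V})$, a measurable $v:[0,1]\to\mathbb{R}^{\mathcal{E}}$ and a measurable $g:[0,1]\to\mathcal{P}(\mathcal{E})$. The discrete transport equation is $\partial_tf(t)_x=\sum_k\omega_{x,k}v(t)_kg(t)_k$ for a.e. $t$ and all $x$. For $q\ge1$, $\mathcal{I}_q(v,g)=\big(\int_0^1\sum_kg(t)_k|v(t)_k|^qdt\big)^{1/q}$. $V_q(\mu,\nu)$ denotes the infimum of $\mathcal{I}_q(v,g)$ over all triples satisfying the transport equation with $f(0)=\mu$ and $f(1)=\nu$. *)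

theory Defs
  imports "HOL-Analysis.Analysis"
begin

text \<open>An oriented finite graph: vertices of finite type 'v, edges of finite type 'e;
  edge k goes from src k (lower end) to tgt k (upper end).\<close>

definition incidence :: "('e \<Rightarrow> 'v) \<Rightarrow> ('e \<Rightarrow> 'v) \<Rightarrow> 'v \<Rightarrow> 'e \<Rightarrow> real" where
  "incidence src tgt x k = (if x = tgt k then 1 else if x = src k then -1 else 0)"

definition adjacent :: "('e \<Rightarrow> 'v) \<Rightarrow> ('e \<Rightarrow> 'v) \<Rightarrow> 'v \<Rightarrow> 'v \<Rightarrow> bool" where
  "adjacent src tgt x y \<longleftrightarrow> (\<exists>k. (src k = x \<and> tgt k = y) \<or> (src k = y \<and> tgt k = x))"

definition graph_connected :: "('e \<Rightarrow> 'v) \<Rightarrow> ('e \<Rightarrow> 'v) \<Rightarrow> bool" where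
  "graph_connected src tgt \<longleftrightarrow> (\<forall>x y. (adjacent src tgt)\<^sup>*\<^sup>* x y)"

definition prob_vecs :: "('a::finite \<Rightarrow> real) set" where
  "prob_vecs = {p. (\<forall>a. 0 \<le> p a) \<and> (\<Sum>a\<in>UNIV. p a) = 1}"

definition abs_cont_on :: "real \<Rightarrow> real \<Rightarrow> (real \<Rightarrow> real) \<Rightarrow> bool" where
  "abs_cont_on a b h \<longleftrightarrow>
    (\<forall>\<epsilon>>0. \<exists>\<delta>>0. \<forall>(n::nat) (s::nat \<Rightarrow> real) (t::nat \<Rightarrow> real).
       (\<forall>i<n. a \<le> s i \<and> s i \<le> t i \<and> t i \<le> b) \<and>
       (\<forall>i j. i < j \<and> j < n \<longrightarrow> t i \<le> s j) \<and>
       (\<Sum>i<n. t i - s i) < \<delta>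
       \<longrightarrow> (\<Sum>i<n. \<bar>h (t i) - h (s i)\<bar>) < \<epsilon>)"

definition transport_triple ::
  "('e \<Rightarrow> 'v) \<Rightarrow> ('e \<Rightarrow> 'v) \<Rightarrow> ('v::finite \<Rightarrow> real) \<Rightarrow> ('v \<Rightarrow> real) \<Rightarrow>
   (real \<Rightarrow> 'v \<Rightarrow> real) \<Rightarrow> (real \<Rightarrow> ('e::finite) \<Rightarrow> real) \<Rightarrow> (real \<Rightarrow> 'e \<Rightarrow> real) \<Rightarrow> bool" where
  "transport_triple src tgt \<mu> \<nu> f v g \<longleftrightarrow>
     (\<forall>t\<in>{0..1}. f t \<in> prob_vecs) \<and>
     (\<forall>x. abs_cont_on 0 1 (\<lambda>t. f t x)) \<and>
     (\<forall>k. (\<lambda>t. v t k) \<in> borel_measurable lborel) \<and>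
     (\<forall>k. (\<lambda>t. g t k) \<in> borel_measurable lborel) \<and>
     (\<forall>t\<in>{0..1}. g t \<in> prob_vecs) \<and>
     (AE t in lborel. t \<in> {0..1} \<longrightarrow>
        (\<forall>x. ((\<lambda>s. f s x) has_real_derivative
                (\<Sum>k\<in>UNIV. incidence src tgt x k * v t k * g t k)) (at t within {0..1}))) \<and>
     f 0 = \<mu> \<and> f 1 = \<nu>"

definition action :: "real \<Rightarrow> (real \<Rightarrow> ('e::finite) \<Rightarrow> real) \<Rightarrow> (real \<Rightarrow> 'e \<Rightarrow> real) \<Rightarrow> ennreal" where
  "action q v g =
    (let J = (\<integral>\<^sup>+ t. ennreal (\<Sum>k\<in>UNIV. g t k * \<bar>v t k\<bar> powr q) * indicator {0..1} t \<partial>lborel)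
     in if J = (\<infinity>::ennreal) then (\<infinity>::ennreal) else ennreal (enn2real J powr (1 / q)))"

definition Vq :: "('e::finite \<Rightarrow> 'v::finite) \<Rightarrow> ('e \<Rightarrow> 'v) \<Rightarrow> real \<Rightarrow> ('v \<Rightarrow> real) \<Rightarrow> ('v \<Rightarrow> real) \<Rightarrow> ennreal" where
  "Vq src tgt q \<mu> \<nu> = (INF (f, v, g) \<in> {(f, v, g). transport_triple src tgt \<mu> \<nu> f v g}. action q v g)"

end

theory Submission
  imports Defs
begin

text \<open>
  \<open>V\<^sub>q\<close> is an infimum of path lengths, so symmetry and the triangle inequality come from
  running a path backwards in time and from running two paths one after the other, each on a
  rescaled time interval; if the switching time is chosen proportional to the two actions, the
  action of the concatenated path is at most their sum.  Finiteness uses connectivity: the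
  divergence equation \<open>\<Omega> J = \<nu> - \<mu>\<close> has a solution, and moving mass along \<open>J\<close> at constant
  speed is an admissible path.  Definiteness uses the Young-type inequality
  \<open>\<bar>v\<bar> \<le> c + c powr (1 - q) * \<bar>v\<bar> powr q\<close>: it bounds the rate of change of every mass
  \<open>f(t)\<^sub>x\<close> by a function whose integral is at most \<open>2 c\<close> when \<open>c\<close> bounds the action.  The analytic input is the fundamental theorem of
  calculus for absolutely continuous functions with an a.e. derivative, obtained from a gauge
  argument: the straddle lemma controls cells tagged where the derivative exists, and absolute
  continuity controls the cells tagged in the exceptional null set, which fit into an open set
  of small measure.
\<close>

section \<open>Absolute continuity\<close>

definition interval_chain :: "real \<Rightarrow> real \<Rightarrow> nat \<Rightarrow> (nat \<Rightarrow> real) \<Rightarrow> (nat \<Rightarrow> real) \<Rightarrow> bool" where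
  "interval_chain a b n s t \<longleftrightarrow>
     (\<forall>i<n. a \<le> s i \<and> s i \<le> t i \<and> t i \<le> b) \<and> (\<forall>i j. i < j \<and> j < n \<longrightarrow> t i \<le> s j)"

lemma abs_cont_on_iff:
  "abs_cont_on a b h \<longleftrightarrow>
     (\<forall>\<epsilon>>0. \<exists>\<delta>>0. \<forall>n s t. interval_chain a b n s t \<and> (\<Sum>i<n. t i - s i) < \<delta>
        \<longrightarrow> (\<Sum>i<n. \<bar>h (t i) - h (s i)\<bar>) < \<epsilon>)"
  unfolding abs_cont_on_def interval_chain_def by simp

lemma abs_cont_onE:
  assumes "abs_cont_on a b h" "\<epsilon> > 0"
  obtains \<delta> where "\<delta> > 0"
    "\<And>n s t. interval_chain a b n s t \<Longrightarrow> (\<Sum>i<n. t i - s i) < \<delta> \<Longrightarrow> (\<Sum>i<n. \<bar>h (t i) - h (s i)\<bar>) < \<epsilon>"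
  using assms unfolding abs_cont_on_iff by meson

lemma abs_cont_on_cong:
  assumes "abs_cont_on a b h" "\<And>x. x \<in> {a..b} \<Longrightarrow> h x = h' x"
  shows "abs_cont_on a b h'"
proof -
  have "(\<Sum>i<n. \<bar>h' (t i) - h' (s i)\<bar>) = (\<Sum>i<n. \<bar>h (t i) - h (s i)\<bar>)"
    if "interval_chain a b n s t" for n s t
    using that assms(2) unfolding interval_chain_def by (intro sum.cong) auto
  with assms(1) show ?thesis unfolding abs_cont_on_iff by metis
qed

lemma abs_cont_on_affine_fun: "abs_cont_on a b (\<lambda>x. \<alpha> + \<beta> * x)"
  unfolding abs_cont_on_iff
proof (intro allI impI)
  fix \<epsilon> :: real assume "\<epsilon> > 0"
  show "\<exists>\<delta>>0. \<forall>n s t. interval_chain a b n s t \<and> (\<Sum>i<n. t i - s i) < \<delta>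
      \<longrightarrow> (\<Sum>i<n. \<bar>(\<alpha> + \<beta> * t i) - (\<alpha> + \<beta> * s i)\<bar>) < \<epsilon>"
  proof (intro exI[of _ "\<epsilon> / (\<bar>\<beta>\<bar> + 1)"] conjI allI impI)
    show "\<epsilon> / (\<bar>\<beta>\<bar> + 1) > 0" using \<open>\<epsilon> > 0\<close> by simp
    fix n s t assume "interval_chain a b n s t \<and> (\<Sum>i<n. t i - s i) < \<epsilon> / (\<bar>\<beta>\<bar> + 1)"
    then have chain: "interval_chain a b n s t" and small: "(\<Sum>i<n. t i - s i) < \<epsilon> / (\<bar>\<beta>\<bar> + 1)"
      by auto
    have "(\<Sum>i<n. \<bar>(\<alpha> + \<beta> * t i) - (\<alpha> + \<beta> * s i)\<bar>) = \<bar>\<beta>\<bar> * (\<Sum>i<n. t i - s i)"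
      using chain unfolding interval_chain_def
      by (auto simp: sum_distrib_left abs_mult simp flip: right_diff_distrib intro!: sum.cong)
    also have "\<dots> \<le> (\<bar>\<beta>\<bar> + 1) * (\<Sum>i<n. t i - s i)"
      using chain unfolding interval_chain_def by (intro mult_right_mono sum_nonneg) auto
    also have "\<dots> < \<epsilon>" using small by (simp add: field_simps)
    finally show "(\<Sum>i<n. \<bar>(\<alpha> + \<beta> * t i) - (\<alpha> + \<beta> * s i)\<bar>) < \<epsilon>" .
  qed
qed

lemma abs_cont_on_comp_affine:
  assumes "abs_cont_on (c * a + d) (c * b + d) h" "c > 0"
  shows "abs_cont_on a b (\<lambda>x. h (c * x + d))"
  unfolding abs_cont_on_iff
proof (intro allI impI)
  fix \<epsilon> :: real assume "\<epsilon> > 0"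
  obtain \<delta> where "\<delta> > 0" and \<delta>: "\<And>n s t. interval_chain (c * a + d) (c * b + d) n s t \<Longrightarrow>
      (\<Sum>i<n. t i - s i) < \<delta> \<Longrightarrow> (\<Sum>i<n. \<bar>h (t i) - h (s i)\<bar>) < \<epsilon>"
    using assms(1) \<open>\<epsilon> > 0\<close> by (rule abs_cont_onE) (rule that)
  show "\<exists>\<delta>>0. \<forall>n s t. interval_chain a b n s t \<and> (\<Sum>i<n. t i - s i) < \<delta>
      \<longrightarrow> (\<Sum>i<n. \<bar>h (c * t i + d) - h (c * s i + d)\<bar>) < \<epsilon>"
  proof (intro exI[of _ "\<delta> / c"] conjI allI impI)
    show "\<delta> / c > 0" using \<open>\<delta> > 0\<close> \<open>c > 0\<close> by simp
    fix n s t assume "interval_chain a b n s t \<and> (\<Sum>i<n. t i - s i) < \<delta> / c"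
    then have chain: "interval_chain a b n s t" and small: "(\<Sum>i<n. t i - s i) < \<delta> / c"
      by auto
    show "(\<Sum>i<n. \<bar>h (c * t i + d) - h (c * s i + d)\<bar>) < \<epsilon>"
    proof (rule \<delta>)
      show "interval_chain (c * a + d) (c * b + d) n (\<lambda>i. c * s i + d) (\<lambda>i. c * t i + d)"
        using chain \<open>c > 0\<close> unfolding interval_chain_def by simp
      have "(\<Sum>i<n. (c * t i + d) - (c * s i + d)) = c * (\<Sum>i<n. t i - s i)"
        by (simp add: sum_distrib_left algebra_simps)
      then show "(\<Sum>i<n. (c * t i + d) - (c * s i + d)) < \<delta>"
        using small \<open>c > 0\<close> by (simp add: field_simps)
    qed
  qed
qed

lemma abs_cont_on_reflect:
  assumes "abs_cont_on a b h"
  shows "abs_cont_on (- b) (- a) (\<lambda>x. h (- x))"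
  unfolding abs_cont_on_iff
proof (intro allI impI)
  fix \<epsilon> :: real assume "\<epsilon> > 0"
  obtain \<delta> where "\<delta> > 0" and \<delta>: "\<And>n s t. interval_chain a b n s t \<Longrightarrow>
      (\<Sum>i<n. t i - s i) < \<delta> \<Longrightarrow> (\<Sum>i<n. \<bar>h (t i) - h (s i)\<bar>) < \<epsilon>"
    using assms \<open>\<epsilon> > 0\<close> by (rule abs_cont_onE) (rule that)
  show "\<exists>\<delta>>0. \<forall>n s t. interval_chain (- b) (- a) n s t \<and> (\<Sum>i<n. t i - s i) < \<delta>
      \<longrightarrow> (\<Sum>i<n. \<bar>h (- t i) - h (- s i)\<bar>) < \<epsilon>"
  proof (intro exI[of _ \<delta>] conjI allI impI \<open>\<delta> > 0\<close>)
    fix n s t assume "interval_chain (- b) (- a) n s t \<and> (\<Sum>i<n. t i - s i) < \<delta>"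
    then have chain: "interval_chain (- b) (- a) n s t" and small: "(\<Sum>i<n. t i - s i) < \<delta>"
      by auto
    \<comment> \<open>reflection reverses the order of the intervals\<close>
    define s' where "s' i = - t (n - Suc i)" for i
    define t' where "t' i = - s (n - Suc i)" for i
    have "interval_chain a b n s' t'"
      unfolding interval_chain_def
    proof (rule conjI; intro allI impI)
      fix i assume "i < n"
      then have "n - Suc i < n" by simp
      then show "a \<le> s' i \<and> s' i \<le> t' i \<and> t' i \<le> b"
        using chain unfolding interval_chain_def s'_def t'_def by force
    next
      fix i j assume "i < j \<and> j < n"
      then have "n - Suc j < n - Suc i" "n - Suc i < n" by auto
      then show "t' i \<le> s' j" using chain unfolding interval_chain_def s'_def t'_def by force
    qed
    moreover have "(\<Sum>i<n. t' i - s' i) = (\<Sum>i<n. t i - s i)"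
      unfolding s'_def t'_def using sum.nat_diff_reindex[of "\<lambda>i. t i - s i" n] by simp
    moreover have "(\<Sum>i<n. \<bar>h (t' i) - h (s' i)\<bar>) = (\<Sum>i<n. \<bar>h (- t i) - h (- s i)\<bar>)"
      unfolding s'_def t'_def using sum.nat_diff_reindex[of "\<lambda>i. \<bar>h (- t i) - h (- s i)\<bar>" n]
      by (simp add: abs_minus_commute)
    ultimately show "(\<Sum>i<n. \<bar>h (- t i) - h (- s i)\<bar>) < \<epsilon>" using \<delta> small by metis
  qed
qed

lemma abs_diff_le_split_at:
  fixes h :: "real \<Rightarrow> real"
  assumes "s \<le> t"
  shows "\<bar>h t - h s\<bar> \<le> \<bar>h (min t m) - h (min s m)\<bar> + \<bar>h (max t m) - h (max s m)\<bar>"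
proof -
  consider "t \<le> m" | "m \<le> s" | "s < m \<and> m < t" by linarith
  then show ?thesis by cases (use assms in \<open>simp_all add: min_def max_def\<close>)
qed

lemma abs_cont_on_join:
  assumes "abs_cont_on a m h" "abs_cont_on m b h" "a \<le> m" "m \<le> b"
  shows "abs_cont_on a b h"
  unfolding abs_cont_on_iff
proof (intro allI impI)
  fix \<epsilon> :: real assume "\<epsilon> > 0"
  then have "\<epsilon> / 2 > 0" by simp
  obtain \<delta>1 where "\<delta>1 > 0" and \<delta>1: "\<And>n s t. interval_chain a m n s t \<Longrightarrow>
      (\<Sum>i<n. t i - s i) < \<delta>1 \<Longrightarrow> (\<Sum>i<n. \<bar>h (t i) - h (s i)\<bar>) < \<epsilon> / 2"
    using assms(1) \<open>\<epsilon> / 2 > 0\<close> by (rule abs_cont_onE) (rule that)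
  obtain \<delta>2 where "\<delta>2 > 0" and \<delta>2: "\<And>n s t. interval_chain m b n s t \<Longrightarrow>
      (\<Sum>i<n. t i - s i) < \<delta>2 \<Longrightarrow> (\<Sum>i<n. \<bar>h (t i) - h (s i)\<bar>) < \<epsilon> / 2"
    using assms(2) \<open>\<epsilon> / 2 > 0\<close> by (rule abs_cont_onE) (rule that)
  show "\<exists>\<delta>>0. \<forall>n s t. interval_chain a b n s t \<and> (\<Sum>i<n. t i - s i) < \<delta>
      \<longrightarrow> (\<Sum>i<n. \<bar>h (t i) - h (s i)\<bar>) < \<epsilon>"
  proof (intro exI[of _ "min \<delta>1 \<delta>2"] conjI allI impI)
    show "min \<delta>1 \<delta>2 > 0" using \<open>\<delta>1 > 0\<close> \<open>\<delta>2 > 0\<close> by simp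
    fix n s t assume "interval_chain a b n s t \<and> (\<Sum>i<n. t i - s i) < min \<delta>1 \<delta>2"
    then have chain: "interval_chain a b n s t" and small: "(\<Sum>i<n. t i - s i) < min \<delta>1 \<delta>2"
      by auto
    have st: "s i \<le> t i" if "i < n" for i using chain that unfolding interval_chain_def by auto
    have chain1: "interval_chain a m n (\<lambda>i. min (s i) m) (\<lambda>i. min (t i) m)"
      using chain assms(3) unfolding interval_chain_def by (auto intro: min.coboundedI1)
    have chain2: "interval_chain m b n (\<lambda>i. max (s i) m) (\<lambda>i. max (t i) m)"
      using chain assms(4) unfolding interval_chain_def by (auto intro: max.coboundedI1)
    have len: "t i - s i = (min (t i) m - min (s i) m) + (max (t i) m - max (s i) m)" for i
      by (simp add: min_def max_def)
    have "(\<Sum>i<n. t i - s i) = (\<Sum>i<n. min (t i) m - min (s i) m) + (\<Sum>i<n. max (t i) m - max (s i) m)"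
      by (simp add: len sum.distrib)
    moreover have "(\<Sum>i<n. min (t i) m - min (s i) m) \<ge> 0" "(\<Sum>i<n. max (t i) m - max (s i) m) \<ge> 0"
      using st by (auto intro!: sum_nonneg min.mono max.mono min.coboundedI1 max.coboundedI1)
    ultimately have "(\<Sum>i<n. min (t i) m - min (s i) m) < \<delta>1" "(\<Sum>i<n. max (t i) m - max (s i) m) < \<delta>2"
      using small by auto
    then have "(\<Sum>i<n. \<bar>h (min (t i) m) - h (min (s i) m)\<bar>) < \<epsilon> / 2"
      "(\<Sum>i<n. \<bar>h (max (t i) m) - h (max (s i) m)\<bar>) < \<epsilon> / 2"
      using \<delta>1[OF chain1] \<delta>2[OF chain2] by auto
    moreover have "(\<Sum>i<n. \<bar>h (t i) - h (s i)\<bar>) \<le>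
        (\<Sum>i<n. \<bar>h (min (t i) m) - h (min (s i) m)\<bar>) + (\<Sum>i<n. \<bar>h (max (t i) m) - h (max (s i) m)\<bar>)"
      unfolding sum.distrib[symmetric] by (intro sum_mono abs_diff_le_split_at st) simp
    ultimately show "(\<Sum>i<n. \<bar>h (t i) - h (s i)\<bar>) < \<epsilon>" by linarith
  qed
qed

lemma nonoverlapping_intervals_enum:
  fixes \<D> :: "real set set"
  assumes "finite \<D>" and intervals: "\<And>K. K \<in> \<D> \<Longrightarrow> \<exists>u v. u < v \<and> K = {u..v}"
    and disjoint: "pairwise (\<lambda>K L. interior K \<inter> interior L = {}) \<D>"
  obtains n :: nat and s t :: "nat \<Rightarrow> real"
  where "bij_betw (\<lambda>i. {s i..t i}) {..<n} \<D>" "\<And>i. i < n \<Longrightarrow> s i < t i"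
    "\<And>i j. i < j \<Longrightarrow> j < n \<Longrightarrow> t i \<le> s j"
proof -
  obtain xs where xs: "set xs = \<D>" "distinct xs" using finite_distinct_list[OF \<open>finite \<D>\<close>] by blast
  define ys where "ys = sort_key Inf xs"
  have ys: "set ys = \<D>" "distinct ys" "sorted (map Inf ys)" using xs unfolding ys_def by auto
  define s where "s i = Inf (ys ! i)" for i
  define t where "t i = Sup (ys ! i)" for i
  have ys_nth: "ys ! i = {s i..t i} \<and> s i < t i" if i: "i < length ys" for i
  proof -
    obtain u v where "u < v" "ys ! i = {u..v}" using intervals ys(1) nth_mem[OF i] by blast
    then show ?thesis unfolding s_def t_def by simp
  qed
  show thesis
  proof (rule that)
    show "bij_betw (\<lambda>i. {s i..t i}) {..<length ys} \<D>"
      using ys_nth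
      by (intro bij_betw_cong[THEN iffD1, OF _ bij_betw_nth[OF ys(2) refl ys(1)[symmetric]]]) auto
  next
    fix i j assume ij: "i < j" "j < length ys"
    have "ys ! i \<noteq> ys ! j" using ij ys(2) by (simp add: nth_eq_iff_index_eq)
    then have disj: "{s i<..<t i} \<inter> {s j<..<t j} = {}"
      using disjoint ys_nth[of i] ys_nth[of j] ij ys(1) unfolding pairwise_def
      by (metis interior_atLeastAtMost_real nth_mem order.strict_trans)
    have "s i \<le> s j" using ys(3) ij unfolding s_def by (auto simp: sorted_iff_nth_mono)
    moreover have "s i < t i" "s j < t j" using ys_nth ij by auto
    ultimately have "(s j + min (t i) (t j)) / 2 \<in> {s i<..<t i} \<inter> {s j<..<t j}" if "s j < t i"
      using that by auto
    with disj show "t i \<le> s j" by force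
  qed (use ys_nth in auto)
qed

lemma tagged_partial_division_degenerate:
  fixes p :: "(real \<times> real set) set"
  assumes "p tagged_partial_division_of S" "(x, K) \<in> p" "measure lborel K = 0"
  shows "K = {x}"
proof -
  obtain u v where "K = {u..v}" using tagged_partial_division_ofD(4)[OF assms(1,2)] by auto
  moreover have "x \<in> K" using tagged_partial_division_ofD(2)[OF assms(1,2)] .
  ultimately show ?thesis using assms(3) by auto
qed

lemma tagged_partial_division_sum_snd:
  fixes d :: "real set \<Rightarrow> 'a::comm_monoid_add"
  assumes p: "p tagged_partial_division_of S" and d: "\<And>u. d {u} = 0"
  shows "(\<Sum>(x, K)\<in>p. d K) = (\<Sum>K\<in>snd ` p. d K)"
proof -
  have "sum d (snd ` p) = sum (d \<circ> snd) p"
  proof (rule sum.reindex_nontrivial)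
    show "finite p" using tagged_partial_division_ofD(1)[OF p] .
  next
    fix xK yK assume "xK \<in> p" "yK \<in> p" "xK \<noteq> yK" "snd xK = snd yK"
    then obtain x y K where xK: "xK = (x, K)" "(x, K) \<in> p" "(y, K) \<in> p" "(x, K) \<noteq> (y, K)"
      by (metis prod.collapse)
    \<comment> \<open>a cell carrying two tags has empty interior, hence is a point\<close>
    then have "interior K = {}" using tagged_partial_division_ofD(5)[OF p] by blast
    moreover obtain u v where "K = {u..v}" using tagged_partial_division_ofD(4)[OF p xK(2)] by auto
    ultimately have "measure lborel K = 0" by simp
    then show "d (snd xK) = 0"
      using tagged_partial_division_degenerate[OF p xK(2)] xK(1) d by simp
  qed
  then show ?thesis by (simp add: case_prod_beta comp_def)
qed

lemma tagged_partial_division_interval_chain: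
  fixes p :: "(real \<times> real set) set"
  assumes p: "p tagged_partial_division_of {a..b}"
  obtains n s t where "interval_chain a b n s t"
    "\<And>d :: real set \<Rightarrow> real. (\<And>u. d {u} = 0) \<Longrightarrow> (\<Sum>(x, K)\<in>p. d K) = (\<Sum>i<n. d {s i..t i})"
proof -
  define \<D> where "\<D> = {K \<in> snd ` p. measure lborel K \<noteq> 0}"
  have fin: "finite \<D>" using tagged_partial_division_ofD(1)[OF p] unfolding \<D>_def by simp
  have intervals: "\<exists>u v. u < v \<and> K = {u..v}" if "K \<in> \<D>" for K
  proof -
    obtain x where xK: "(x, K) \<in> p" "measure lborel K \<noteq> 0" using \<open>K \<in> \<D>\<close> unfolding \<D>_def by auto
    then obtain u v where "K = {u..v}" using tagged_partial_division_ofD(4)[OF p] by fastforce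
    moreover have "u < v" using xK(2) \<open>K = {u..v}\<close> by (cases "u < v") (auto split: if_splits)
    ultimately show ?thesis by blast
  qed
  have disjoint: "pairwise (\<lambda>K L. interior K \<inter> interior L = {}) \<D>"
    using tagged_partial_division_ofD(5)[OF p] unfolding \<D>_def pairwise_def by fastforce
  obtain n :: nat and s t :: "nat \<Rightarrow> real" where bij: "bij_betw (\<lambda>i. {s i..t i}) {..<n} \<D>"
    and st: "\<And>i. i < n \<Longrightarrow> s i < t i" and ord: "\<And>i j. i < j \<Longrightarrow> j < n \<Longrightarrow> t i \<le> s j"
    using nonoverlapping_intervals_enum[OF fin intervals disjoint] by metis
  have "interval_chain a b n s t"
  proof -
    have "{s i..t i} \<subseteq> {a..b}" if "i < n" for i
    proof -
      have "{s i..t i} \<in> snd ` p" using bij_betwE[OF bij] that unfolding \<D>_def by blast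
      then show ?thesis using tagged_partial_division_ofD(3)[OF p] by force
    qed
    then have "a \<le> s i \<and> t i \<le> b" if "i < n" for i
      using st[OF that] that by fastforce
    then show ?thesis using st ord unfolding interval_chain_def by (simp add: less_imp_le)
  qed
  moreover have "(\<Sum>(x, K)\<in>p. d K) = (\<Sum>i<n. d {s i..t i})" if "\<And>u. d {u} = 0" for d :: "real set \<Rightarrow> real"
  proof -
    have "(\<Sum>(x, K)\<in>p. d K) = (\<Sum>K\<in>snd ` p. d K)"
      using p that by (rule tagged_partial_division_sum_snd)
    also have "\<dots> = (\<Sum>K\<in>\<D>. d K)"
      using tagged_partial_division_ofD(1)[OF p] that unfolding \<D>_def
      by (intro sum.mono_neutral_right) (auto dest: tagged_partial_division_degenerate[OF p])
    also have "\<dots> = (\<Sum>i<n. d {s i..t i})"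
      using sum.reindex_bij_betw[OF bij, of d] by simp
    finally show ?thesis .
  qed
  ultimately show thesis by (rule that)
qed

lemma abs_cont_on_tagged_partial_division:
  assumes "abs_cont_on a b h" "\<epsilon> > 0"
  obtains \<delta> where "\<delta> > 0" "\<And>p. p tagged_partial_division_of {a..b} \<Longrightarrow> (\<Sum>(x, K)\<in>p. measure lborel K) < \<delta> \<Longrightarrow>
    (\<Sum>(x, K)\<in>p. \<bar>h (Sup K) - h (Inf K)\<bar>) < \<epsilon>"
proof -
  obtain \<delta> where "\<delta> > 0" and \<delta>: "\<And>n s t. interval_chain a b n s t \<Longrightarrow>
      (\<Sum>i<n. t i - s i) < \<delta> \<Longrightarrow> (\<Sum>i<n. \<bar>h (t i) - h (s i)\<bar>) < \<epsilon>"
    using assms by (rule abs_cont_onE) (rule that)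
  have "(\<Sum>(x, K)\<in>p. \<bar>h (Sup K) - h (Inf K)\<bar>) < \<epsilon>"
    if p: "p tagged_partial_division_of {a..b}" and small: "(\<Sum>(x, K)\<in>p. measure lborel K) < \<delta>" for p
  proof -
    obtain n s t where chain: "interval_chain a b n s t" and sum_eq: "\<And>d :: real set \<Rightarrow> real.
        (\<And>u. d {u} = 0) \<Longrightarrow> (\<Sum>(x, K)\<in>p. d K) = (\<Sum>i<n. d {s i..t i})"
      using tagged_partial_division_interval_chain[OF p] by metis
    have st: "s i \<le> t i" if "i < n" for i using chain that unfolding interval_chain_def by auto
    then have "(\<Sum>i<n. t i - s i) < \<delta>" using small sum_eq[of "measure lborel"] by simp
    then have "(\<Sum>i<n. \<bar>h (t i) - h (s i)\<bar>) < \<epsilon>" by (rule \<delta>[OF chain])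
    then show ?thesis using sum_eq[of "\<lambda>K. \<bar>h (Sup K) - h (Inf K)\<bar>"] st by simp
  qed
  with \<open>\<delta> > 0\<close> show thesis by (rule that)
qed

section \<open>The fundamental theorem of calculus for absolutely continuous functions\<close>

lemma straddle_lemma:
  fixes h :: "real \<Rightarrow> real"
  assumes "(h has_real_derivative D) (at x within S)" "\<epsilon> > 0"
  obtains r where "r > 0" "\<And>u v. u \<in> S \<Longrightarrow> v \<in> S \<Longrightarrow> u \<le> x \<Longrightarrow> x \<le> v \<Longrightarrow> {u..v} \<subseteq> ball x r \<Longrightarrow>
    \<bar>h v - h u - D * (v - u)\<bar> \<le> \<epsilon> * (v - u)"
proof -
  have "((\<lambda>y. (h y - h x) / (y - x)) \<longlongrightarrow> D) (at x within S)"
    using assms(1) by (simp add: has_field_derivative_iff)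
  then have "eventually (\<lambda>y. dist ((h y - h x) / (y - x)) D < \<epsilon>) (at x within S)"
    using assms(2) by (rule tendstoD)
  then obtain r where "r > 0"
    and r: "\<And>y. y \<in> S \<Longrightarrow> y \<noteq> x \<Longrightarrow> dist y x < r \<Longrightarrow> dist ((h y - h x) / (y - x)) D < \<epsilon>"
    unfolding eventually_at by blast
  have near: "\<bar>h y - h x - D * (y - x)\<bar> \<le> \<epsilon> * \<bar>y - x\<bar>" if "y \<in> S" "\<bar>y - x\<bar> < r" for y
  proof (cases "y = x")
    case False
    then have "\<bar>(h y - h x) / (y - x) - D\<bar> < \<epsilon>" using r that by (simp add: dist_real_def)
    moreover have "h y - h x - D * (y - x) = ((h y - h x) / (y - x) - D) * (y - x)"
      using False by (simp add: field_simps)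
    ultimately show ?thesis by (simp add: abs_mult mult_right_mono)
  qed simp
  show thesis
  proof (rule that[OF \<open>r > 0\<close>])
    fix u v assume uv: "u \<in> S" "v \<in> S" "u \<le> x" "x \<le> v" "{u..v} \<subseteq> ball x r"
    then have "u \<in> ball x r" "v \<in> ball x r" by (auto simp del: mem_ball)
    then have "\<bar>u - x\<bar> < r" "\<bar>v - x\<bar> < r" by (auto simp: dist_real_def abs_minus_commute)
    then have "\<bar>h v - h x - D * (v - x)\<bar> \<le> \<epsilon> * (v - x)" "\<bar>h u - h x - D * (u - x)\<bar> \<le> \<epsilon> * (x - u)"
      using near[of v] near[of u] uv by auto
    then show "\<bar>h v - h u - D * (v - u)\<bar> \<le> \<epsilon> * (v - u)" by (simp add: algebra_simps abs_le_iff)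
  qed
qed

lemma straddle_gauge:
  fixes h :: "real \<Rightarrow> real"
  assumes "\<And>t. t \<in> S \<Longrightarrow> (h has_real_derivative h' t) (at t within T)" "\<epsilon> > 0"
  obtains r where "\<And>t. r t > 0" "\<And>t u v. t \<in> S \<Longrightarrow> u \<in> T \<Longrightarrow> v \<in> T \<Longrightarrow> u \<le> t \<Longrightarrow> t \<le> v \<Longrightarrow>
    {u..v} \<subseteq> ball t (r t) \<Longrightarrow> \<bar>h v - h u\<bar> \<le> (\<bar>h' t\<bar> + \<epsilon>) * (v - u)"
proof -
  have "\<exists>r>0. t \<in> S \<longrightarrow> (\<forall>u v. u \<in> T \<longrightarrow> v \<in> T \<longrightarrow> u \<le> t \<longrightarrow> t \<le> v \<longrightarrow> {u..v} \<subseteq> ball t r \<longrightarrow>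
      \<bar>h v - h u\<bar> \<le> (\<bar>h' t\<bar> + \<epsilon>) * (v - u))" for t
  proof (cases "t \<in> S")
    case True
    obtain r where "r > 0" and r: "\<And>u v. u \<in> T \<Longrightarrow> v \<in> T \<Longrightarrow> u \<le> t \<Longrightarrow> t \<le> v \<Longrightarrow> {u..v} \<subseteq> ball t r \<Longrightarrow>
        \<bar>h v - h u - h' t * (v - u)\<bar> \<le> \<epsilon> * (v - u)"
      using straddle_lemma[OF assms(1)[OF True] assms(2)] by metis
    have "\<bar>h v - h u\<bar> \<le> (\<bar>h' t\<bar> + \<epsilon>) * (v - u)"
      if "u \<in> T" "v \<in> T" "u \<le> t" "t \<le> v" "{u..v} \<subseteq> ball t r" for u v
    proof -
      have "\<bar>h v - h u\<bar> \<le> \<bar>h v - h u - h' t * (v - u)\<bar> + \<bar>h' t\<bar> * (v - u)"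
        using abs_triangle_ineq[of "h v - h u - h' t * (v - u)" "h' t * (v - u)"] that
        by (simp add: abs_mult)
      then show ?thesis using r[OF that] by (simp add: algebra_simps)
    qed
    then show ?thesis using \<open>r > 0\<close> by blast
  qed (auto intro: exI[of _ 1])
  then obtain r where "\<forall>t. r t > 0 \<and> (t \<in> S \<longrightarrow> (\<forall>u v. u \<in> T \<longrightarrow> v \<in> T \<longrightarrow> u \<le> t \<longrightarrow> t \<le> v \<longrightarrow>
      {u..v} \<subseteq> ball t (r t) \<longrightarrow> \<bar>h v - h u\<bar> \<le> (\<bar>h' t\<bar> + \<epsilon>) * (v - u)))"
    by metis
  then show thesis using that[of r] by blast
qed

lemma null_sets_lborel_open_superset:
  assumes "N \<in> null_sets lborel" "\<delta> > 0"
  obtains U where "open U" "N \<subseteq> U" "U \<in> lmeasurable" "measure lebesgue U < \<delta>"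
proof -
  have N: "N \<in> null_sets lebesgue" using null_sets_completionI[OF assms(1)] .
  then obtain U where U: "open U" "N \<subseteq> U" "U - N \<in> lmeasurable" "emeasure lebesgue (U - N) < ennreal \<delta>"
    using sets_lebesgue_outer_open[OF _ assms(2)] by blast
  have "N \<in> lmeasurable" using N by (auto simp: fmeasurable_def)
  then have "U \<in> lmeasurable" using fmeasurable_Diff_D U(2,3) by blast
  moreover have "measure lebesgue U < \<delta>"
    using U(3,4) measure_Diff_null_set[OF fmeasurableD[OF \<open>U \<in> lmeasurable\<close>] N] assms(2)
    by (simp add: emeasure_eq_measure2 ennreal_less_iff)
  ultimately show thesis using U(1,2) that by blast
qed

lemma tagged_partial_division_measure_le:
  fixes p :: "(real \<times> real set) set"
  assumes p: "p tagged_partial_division_of S" and "\<Union>(snd ` p) \<subseteq> U" "U \<in> lmeasurable"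
  shows "(\<Sum>(x, K)\<in>p. measure lborel K) \<le> measure lebesgue U"
proof -
  have div: "snd ` p division_of \<Union>(snd ` p)" by (rule partial_division_of_tagged_division[OF p])
  have "(\<Sum>(x, K)\<in>p. measure lborel K) = (\<Sum>K\<in>snd ` p. measure lborel K)"
    by (rule tagged_partial_division_sum_snd[OF p]) simp
  also have "\<dots> = (\<Sum>K\<in>snd ` p. measure lebesgue K)"
    by (intro sum.cong) (auto dest!: division_ofD(4)[OF div])
  also have "\<dots> = measure lebesgue (\<Union>(snd ` p))" by (rule content_division[OF div])
  also have "\<dots> \<le> measure lebesgue U"
    using assms(2,3) lmeasurable_division[OF div] by (intro measure_mono_fmeasurable) auto
  finally show ?thesis .
qed

lemma increment_le_tagged_sum:
  fixes h G :: "real \<Rightarrow> real"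
  assumes p: "p tagged_division_of {a..b}" and "a \<le> b"
    and G_nonneg: "\<And>t. t \<in> {a..b} \<Longrightarrow> 0 \<le> G t"
    and good: "\<And>x K. (x, K) \<in> p \<Longrightarrow> x \<notin> N \<Longrightarrow> \<bar>h (Sup K) - h (Inf K)\<bar> \<le> measure lborel K * G x"
  shows "\<bar>h b - h a\<bar> \<le> (\<Sum>(x, K)\<in>p. measure lborel K * G x)
    + (\<Sum>(x, K)\<in>{(x, K) \<in> p. x \<in> N}. \<bar>h (Sup K) - h (Inf K)\<bar>)"
proof -
  define B where "B = {(x, K) \<in> p. x \<in> N}"
  have "B \<subseteq> p" and "finite p" using p unfolding B_def by auto
  have "\<bar>h b - h a\<bar> = \<bar>\<Sum>(x, K)\<in>p. h (Sup K) - h (Inf K)\<bar>"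
    using additive_tagged_division_1[OF \<open>a \<le> b\<close> p, of h] by simp
  also have "\<dots> \<le> (\<Sum>(x, K)\<in>p. \<bar>h (Sup K) - h (Inf K)\<bar>)"
    by (rule order_trans[OF sum_abs]) (simp add: case_prod_beta)
  also have "\<dots> = (\<Sum>(x, K)\<in>p - B. \<bar>h (Sup K) - h (Inf K)\<bar>) + (\<Sum>(x, K)\<in>B. \<bar>h (Sup K) - h (Inf K)\<bar>)"
    using sum.subset_diff[OF \<open>B \<subseteq> p\<close> \<open>finite p\<close>] by simp
  also have "(\<Sum>(x, K)\<in>p - B. \<bar>h (Sup K) - h (Inf K)\<bar>) \<le> (\<Sum>(x, K)\<in>p - B. measure lborel K * G x)"
    using good unfolding B_def by (intro sum_mono) auto
  also have "\<dots> \<le> (\<Sum>(x, K)\<in>p. measure lborel K * G x)"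
  proof (rule sum_mono2[OF \<open>finite p\<close>])
    have "0 \<le> measure lborel K * G x" if "(x, K) \<in> p" for x K
      using G_nonneg tagged_division_ofD(2,3)[OF p that] by auto
    then show "0 \<le> (case xK of (x, K) \<Rightarrow> measure lborel K * G x)" if "xK \<in> p - (p - B)" for xK
      using that by (cases xK) auto
  qed auto
  finally show ?thesis unfolding B_def by simp
qed

lemma abs_cont_on_fine_gauge:
  fixes h h' :: "real \<Rightarrow> real"
  assumes ac: "abs_cont_on a b h" and N: "N \<in> null_sets lborel"
    and der: "\<And>t. t \<in> {a..b} - N \<Longrightarrow> (h has_real_derivative h' t) (at t within {a..b})"
    and "\<epsilon> > 0"
  obtains g where "gauge g"
    "\<And>p x K. p tagged_division_of {a..b} \<Longrightarrow> g fine p \<Longrightarrow> (x, K) \<in> p \<Longrightarrow> x \<notin> N \<Longrightarrow>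
      \<bar>h (Sup K) - h (Inf K)\<bar> \<le> measure lborel K * (\<bar>h' x\<bar> + \<epsilon>)"
    "\<And>p. p tagged_division_of {a..b} \<Longrightarrow> g fine p \<Longrightarrow>
      (\<Sum>(x, K)\<in>{(x, K) \<in> p. x \<in> N}. \<bar>h (Sup K) - h (Inf K)\<bar>) < \<epsilon>"
proof -
  obtain \<delta> where "\<delta> > 0" and small: "\<And>p. p tagged_partial_division_of {a..b} \<Longrightarrow>
      (\<Sum>(x, K)\<in>p. measure lborel K) < \<delta> \<Longrightarrow> (\<Sum>(x, K)\<in>p. \<bar>h (Sup K) - h (Inf K)\<bar>) < \<epsilon>"
    using ac \<open>\<epsilon> > 0\<close> by (rule abs_cont_on_tagged_partial_division) (rule that)
  obtain U where U: "open U" "N \<subseteq> U" "U \<in> lmeasurable" "measure lebesgue U < \<delta>"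
    using N \<open>\<delta> > 0\<close> by (rule null_sets_lborel_open_superset)
  obtain r\<^sub>D where "\<And>t. r\<^sub>D t > 0" and r\<^sub>D: "\<And>t u v. t \<in> {a..b} - N \<Longrightarrow> u \<in> {a..b} \<Longrightarrow> v \<in> {a..b} \<Longrightarrow>
      u \<le> t \<Longrightarrow> t \<le> v \<Longrightarrow> {u..v} \<subseteq> ball t (r\<^sub>D t) \<Longrightarrow> \<bar>h v - h u\<bar> \<le> (\<bar>h' t\<bar> + \<epsilon>) * (v - u)"
    using straddle_gauge[where S = "{a..b} - N", OF der \<open>\<epsilon> > 0\<close>] by metis
  have "\<exists>r>0. t \<in> U \<longrightarrow> ball t r \<subseteq> U" for t
    using U(1) open_contains_ball by (metis zero_less_one)
  then obtain r\<^sub>U where "\<And>t. r\<^sub>U t > 0" and r\<^sub>U: "\<And>t. t \<in> U \<Longrightarrow> ball t (r\<^sub>U t) \<subseteq> U" by metis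
  \<comment> \<open>cells tagged outside N obey the straddle estimate; cells tagged in N lie in U\<close>
  define r where "r t = (if t \<in> N then r\<^sub>U t else r\<^sub>D t)" for t
  have gauge_r: "gauge (\<lambda>t. ball t (r t))"
    using \<open>\<And>t. r\<^sub>D t > 0\<close> \<open>\<And>t. r\<^sub>U t > 0\<close> unfolding r_def by (intro gauge_ball_dependent) auto
  have good: "\<bar>h (Sup K) - h (Inf K)\<bar> \<le> measure lborel K * (\<bar>h' x\<bar> + \<epsilon>)"
    if p: "p tagged_division_of {a..b}" and fine: "(\<lambda>t. ball t (r t)) fine p" and xK: "(x, K) \<in> p"
      and "x \<notin> N" for p x K
  proof -
    obtain u v where K: "K = {u..v}" using tagged_division_ofD(4)[OF p xK] by auto
    have x: "x \<in> {a..b} - N" "u \<in> {a..b}" "v \<in> {a..b}" "u \<le> x" "x \<le> v"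
      using tagged_division_ofD(2,3)[OF p xK] \<open>x \<notin> N\<close> K by auto
    moreover have "K \<subseteq> ball x (r x)" using fine xK unfolding fine_def by blast
    then have "{u..v} \<subseteq> ball x (r\<^sub>D x)" using K \<open>x \<notin> N\<close> unfolding r_def by simp
    ultimately have "\<bar>h v - h u\<bar> \<le> (\<bar>h' x\<bar> + \<epsilon>) * (v - u)" by (rule r\<^sub>D)
    then show ?thesis using K x by (simp add: mult.commute)
  qed
  have bad: "(\<Sum>(x, K)\<in>{(x, K) \<in> p. x \<in> N}. \<bar>h (Sup K) - h (Inf K)\<bar>) < \<epsilon>"
    if p: "p tagged_division_of {a..b}" and fine: "(\<lambda>t. ball t (r t)) fine p" for p
  proof (rule small)
    have "p tagged_partial_division_of {a..b}" using p by (simp add: tagged_division_of_def)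
    then show B: "{(x, K) \<in> p. x \<in> N} tagged_partial_division_of {a..b}"
      by (rule tagged_partial_division_subset) auto
    have "K \<subseteq> U" if "(x, K) \<in> p" "x \<in> N" for x K
    proof -
      have "K \<subseteq> ball x (r x)" using fine that unfolding fine_def by blast
      then have "K \<subseteq> ball x (r\<^sub>U x)" using \<open>x \<in> N\<close> unfolding r_def by simp
      then show ?thesis using r\<^sub>U U(2) \<open>x \<in> N\<close> by blast
    qed
    then have "\<Union>(snd ` {(x, K) \<in> p. x \<in> N}) \<subseteq> U" by force
    then show "(\<Sum>(x, K)\<in>{(x, K) \<in> p. x \<in> N}. measure lborel K) < \<delta>"
      using tagged_partial_division_measure_le[OF B _ U(3)] U(4) by fastforce
  qed
  show thesis by (rule that[OF gauge_r good bad])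
qed

lemma abs_cont_on_increment_le_integral:
  fixes h h' H :: "real \<Rightarrow> real"
  assumes "a \<le> b" and ac: "abs_cont_on a b h" and N: "N \<in> null_sets lborel"
    and der: "\<And>t. t \<in> {a..b} - N \<Longrightarrow> (h has_real_derivative h' t) (at t within {a..b})"
    and bnd: "\<And>t. t \<in> {a..b} - N \<Longrightarrow> \<bar>h' t\<bar> \<le> H t"
    and H_nonneg: "\<And>t. t \<in> {a..b} \<Longrightarrow> 0 \<le> H t"
    and H_int: "(H has_integral I) {a..b}"
  shows "\<bar>h b - h a\<bar> \<le> I"
proof (rule field_le_epsilon)
  fix e :: real assume "e > 0"
  define \<epsilon> where "\<epsilon> = e / (b - a + 2)"
  have "b - a + 2 > 0" using \<open>a \<le> b\<close> by simp
  then have "\<epsilon> > 0" and e: "\<epsilon> * (b - a + 2) = e" using \<open>e > 0\<close> unfolding \<epsilon>_def by simp_all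
  obtain \<gamma> where "gauge \<gamma>" and riemann: "\<And>p. p tagged_division_of {a..b} \<Longrightarrow> \<gamma> fine p \<Longrightarrow>
      norm ((\<Sum>(x, K)\<in>p. measure lborel K *\<^sub>R H x) - I) < \<epsilon>"
    using H_int \<open>\<epsilon> > 0\<close> unfolding has_integral_real by meson
  obtain g where "gauge g"
    and good: "\<And>p x K. p tagged_division_of {a..b} \<Longrightarrow> g fine p \<Longrightarrow> (x, K) \<in> p \<Longrightarrow> x \<notin> N \<Longrightarrow>
      \<bar>h (Sup K) - h (Inf K)\<bar> \<le> measure lborel K * (\<bar>h' x\<bar> + \<epsilon>)"
    and bad: "\<And>p. p tagged_division_of {a..b} \<Longrightarrow> g fine p \<Longrightarrow>
      (\<Sum>(x, K)\<in>{(x, K) \<in> p. x \<in> N}. \<bar>h (Sup K) - h (Inf K)\<bar>) < \<epsilon>"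
    by (rule abs_cont_on_fine_gauge[OF ac N der \<open>\<epsilon> > 0\<close>]) (assumption, rule that)
  obtain p where p: "p tagged_division_of {a..b}" and fine: "(\<lambda>t. \<gamma> t \<inter> g t) fine p"
    using fine_division_exists_real[OF gauge_Int[OF \<open>gauge \<gamma>\<close> \<open>gauge g\<close>]] by blast
  have "\<bar>h b - h a\<bar> \<le> (\<Sum>(x, K)\<in>p. measure lborel K * (H x + \<epsilon>))
      + (\<Sum>(x, K)\<in>{(x, K) \<in> p. x \<in> N}. \<bar>h (Sup K) - h (Inf K)\<bar>)"
  proof (rule increment_le_tagged_sum[OF p \<open>a \<le> b\<close>])
    show "0 \<le> H t + \<epsilon>" if "t \<in> {a..b}" for t using H_nonneg[OF that] \<open>\<epsilon> > 0\<close> by simp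
    fix x K assume xK: "(x, K) \<in> p" "x \<notin> N"
    then have "x \<in> {a..b} - N" using tagged_division_ofD(2,3)[OF p xK(1)] by auto
    then have "measure lborel K * (\<bar>h' x\<bar> + \<epsilon>) \<le> measure lborel K * (H x + \<epsilon>)"
      using bnd by (intro mult_left_mono) auto
    then show "\<bar>h (Sup K) - h (Inf K)\<bar> \<le> measure lborel K * (H x + \<epsilon>)"
      using good[OF p _ xK] fine by (auto simp: fine_Int)
  qed
  also have "(\<Sum>(x, K)\<in>p. measure lborel K * (H x + \<epsilon>))
      = (\<Sum>(x, K)\<in>p. measure lborel K * H x) + (\<Sum>(x, K)\<in>p. measure lborel K) * \<epsilon>"
    by (simp add: distrib_left sum.distrib sum_distrib_right case_prod_beta)
  also have "(\<Sum>(x, K)\<in>p. measure lborel K) = b - a"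
    using additive_content_tagged_division[of p a b] p \<open>a \<le> b\<close> by simp
  also have "(\<Sum>(x, K)\<in>p. measure lborel K * H x) \<le> I + \<epsilon>"
    using riemann[OF p] fine by (simp add: fine_Int abs_less_iff)
  also have "(\<Sum>(x, K)\<in>{(x, K) \<in> p. x \<in> N}. \<bar>h (Sup K) - h (Inf K)\<bar>) \<le> \<epsilon>"
    using bad[OF p] fine by (simp add: fine_Int less_imp_le)
  finally show "\<bar>h b - h a\<bar> \<le> I + e" using e by (simp add: algebra_simps)
qed

section \<open>Energy and action\<close>

definition energy_density :: "real \<Rightarrow> (real \<Rightarrow> 'e::finite \<Rightarrow> real) \<Rightarrow> (real \<Rightarrow> 'e \<Rightarrow> real) \<Rightarrow> real \<Rightarrow> real"
  where "energy_density q v g t = (\<Sum>k\<in>UNIV. g t k * \<bar>v t k\<bar> powr q)"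

definition energy :: "real \<Rightarrow> (real \<Rightarrow> 'e::finite \<Rightarrow> real) \<Rightarrow> (real \<Rightarrow> 'e \<Rightarrow> real) \<Rightarrow> ennreal"
  where "energy q v g = (\<integral>\<^sup>+ t. ennreal (energy_density q v g t) * indicator {0..1} t \<partial>lborel)"

lemma action_energy:
  "action q v g = (if energy q v g = \<infinity> then \<infinity> else ennreal (enn2real (energy q v g) powr (1 / q)))"
  unfolding action_def energy_def energy_density_def Let_def by simp

lemma action_lt_top_iff: "action q v g < \<infinity> \<longleftrightarrow> energy q v g < \<infinity>"
  by (simp add: action_energy less_top)

lemma action_le_ennreal_iff:
  assumes "q > 0" "a \<ge> 0"
  shows "action q v g \<le> ennreal a \<longleftrightarrow> energy q v g \<le> ennreal (a powr q)"
proof (cases "energy q v g = \<infinity>")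
  case False
  then obtain E where E: "energy q v g = ennreal E" "E \<ge> 0" by (cases "energy q v g") auto
  have "E powr (1 / q) \<le> a \<longleftrightarrow> E \<le> a powr q"
  proof
    assume "E powr (1 / q) \<le> a"
    then have "(E powr (1 / q)) powr q \<le> a powr q" using assms by (intro powr_mono2) auto
    then show "E \<le> a powr q" using E assms by (simp add: powr_powr)
  next
    assume "E \<le> a powr q"
    then have "E powr (1 / q) \<le> (a powr q) powr (1 / q)" using E assms by (intro powr_mono2) auto
    then show "E powr (1 / q) \<le> a" using assms by (simp add: powr_powr)
  qed
  then show ?thesis using E assms by (simp add: action_energy)
qed (simp add: action_energy top_unique)

lemma energy_density_measurable:
  assumes "\<And>k. (\<lambda>t. v t k) \<in> borel_measurable borel" "\<And>k. (\<lambda>t. g t k) \<in> borel_measurable borel"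
  shows "energy_density q v g \<in> borel_measurable borel"
proof -
  note assms[measurable]
  show ?thesis unfolding energy_density_def by measurable
qed

lemma energy_density_nonneg: "g t \<in> prob_vecs \<Longrightarrow> 0 \<le> energy_density q v g t"
  unfolding energy_density_def prob_vecs_def by (auto intro: sum_nonneg)

lemma energy_density_has_integral:
  assumes "energy_density q v g \<in> borel_measurable borel" "\<And>t. t \<in> {0..1} \<Longrightarrow> g t \<in> prob_vecs"
    and "energy q v g < \<infinity>"
  shows "(energy_density q v g has_integral enn2real (energy q v g)) {0..1}"
proof -
  let ?\<Phi> = "\<lambda>t. energy_density q v g t * indicator {0..1} t"
  have "(\<integral>\<^sup>+ t. ennreal (?\<Phi> t) \<partial>lborel) = energy q v g"
    unfolding energy_def by (intro nn_integral_cong) (simp split: split_indicator)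
  also have "\<dots> = ennreal (enn2real (energy q v g))" using assms(3) by (simp add: less_top)
  finally have "(?\<Phi> has_integral enn2real (energy q v g)) UNIV"
    using assms(1,2) by (intro nn_integral_has_integral) (auto simp: energy_density_nonneg split: split_indicator)
  then show ?thesis
    by (simp only: indicator_times_eq_if has_integral_restrict_UNIV)
qed

lemma
  assumes "transport_triple src tgt \<mu> \<nu> f v g"
  shows transport_triple_prob: "t \<in> {0..1} \<Longrightarrow> f t \<in> prob_vecs"
    and transport_triple_abs_cont: "abs_cont_on 0 1 (\<lambda>t. f t x)"
    and transport_triple_velocity_measurable: "(\<lambda>t. v t k) \<in> borel_measurable borel"
    and transport_triple_weight_measurable: "(\<lambda>t. g t k) \<in> borel_measurable borel"
    and transport_triple_weight_prob: "t \<in> {0..1} \<Longrightarrow> g t \<in> prob_vecs"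
    and transport_triple_derivative: "AE t in lborel. t \<in> {0..1} \<longrightarrow> (\<forall>x. ((\<lambda>s. f s x) has_real_derivative
      (\<Sum>k\<in>UNIV. incidence src tgt x k * v t k * g t k)) (at t within {0..1}))"
    and transport_triple_start: "f 0 = \<mu>"
    and transport_triple_end: "f 1 = \<nu>"
  using assms unfolding transport_triple_def by auto

lemma Vq_le_action: "transport_triple src tgt \<mu> \<nu> f v g \<Longrightarrow> Vq src tgt q \<mu> \<nu> \<le> action q v g"
  unfolding Vq_def by (rule INF_lower2[of "(f, v, g)"]) auto

lemma Vq_lessE:
  assumes "Vq src tgt q \<mu> \<nu> < c"
  obtains f v g where "transport_triple src tgt \<mu> \<nu> f v g" "action q v g < c"
  using assms unfolding Vq_def INF_less_iff by auto

section \<open>Existence of transport paths\<close>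

lemma flux_along_path:
  fixes src tgt :: "'e::finite \<Rightarrow> 'v"
  assumes loopless: "\<forall>k. src k \<noteq> tgt k" and "(adjacent src tgt)\<^sup>*\<^sup>* x y"
  shows "\<exists>J. \<forall>z. (\<Sum>k\<in>UNIV. incidence src tgt z k * J k) = of_bool (z = y) - of_bool (z = x)"
  using assms(2)
proof (induction rule: rtranclp_induct)
  case base
  show ?case by (intro exI[of _ "\<lambda>k. 0"]) simp
next
  case (step y y')
  then obtain J where J: "\<And>z. (\<Sum>k\<in>UNIV. incidence src tgt z k * J k) = of_bool (z = y) - of_bool (z = x)"
    by blast
  obtain k\<^sub>0 where k\<^sub>0: "(src k\<^sub>0 = y \<and> tgt k\<^sub>0 = y') \<or> (src k\<^sub>0 = y' \<and> tgt k\<^sub>0 = y)"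
    using step.hyps(2) unfolding adjacent_def by blast
  \<comment> \<open>extend the flow by one unit along the new edge, signed by its orientation\<close>
  define \<sigma> :: real where "\<sigma> = (if src k\<^sub>0 = y then 1 else -1)"
  have \<sigma>: "\<sigma> * incidence src tgt z k\<^sub>0 = of_bool (z = y') - of_bool (z = y)" for z
    using k\<^sub>0 loopless[rule_format, of k\<^sub>0] unfolding \<sigma>_def incidence_def by auto
  have "(\<Sum>k\<in>UNIV. incidence src tgt z k * (if k = k\<^sub>0 then \<sigma> else 0)) = \<sigma> * incidence src tgt z k\<^sub>0" for z
    by (simp add: if_distrib[of "times _"] cong: if_cong)
  then have "(\<Sum>k\<in>UNIV. incidence src tgt z k * (J k + (if k = k\<^sub>0 then \<sigma> else 0)))
      = of_bool (z = y') - of_bool (z = x)" for z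
    using J[of z] \<sigma>[of z] by (simp add: distrib_left sum.distrib)
  then show ?case by (intro exI[of _ "\<lambda>k. J k + (if k = k\<^sub>0 then \<sigma> else 0)"] allI)
qed

lemma flux_exists:
  fixes src tgt :: "'e::finite \<Rightarrow> 'v::finite" and w :: "'v \<Rightarrow> real"
  assumes loopless: "\<forall>k. src k \<noteq> tgt k" and conn: "graph_connected src tgt"
    and w: "(\<Sum>z\<in>UNIV. w z) = 0"
  obtains J where "\<And>z. (\<Sum>k\<in>UNIV. incidence src tgt z k * J k) = w z"
proof -
  fix x\<^sub>0 :: 'v
  have "\<exists>J. \<forall>z. (\<Sum>k\<in>UNIV. incidence src tgt z k * J k) = of_bool (z = y) - of_bool (z = x\<^sub>0)" for y
    using flux_along_path[OF loopless] conn unfolding graph_connected_def by blast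
  then obtain J\<^sub>y where J\<^sub>y: "\<And>y z. (\<Sum>k\<in>UNIV. incidence src tgt z k * J\<^sub>y y k) = of_bool (z = y) - of_bool (z = x\<^sub>0)"
    by metis
  \<comment> \<open>superpose the unit flows out of the base vertex with weights \<open>w y\<close>; their sources cancel since \<open>w\<close> sums to 0\<close>
  have "(\<Sum>k\<in>UNIV. incidence src tgt z k * (\<Sum>y\<in>UNIV. w y * J\<^sub>y y k)) = w z" for z
  proof -
    have "(\<Sum>k\<in>UNIV. incidence src tgt z k * (\<Sum>y\<in>UNIV. w y * J\<^sub>y y k))
        = (\<Sum>k\<in>UNIV. \<Sum>y\<in>UNIV. w y * (incidence src tgt z k * J\<^sub>y y k))"
      by (simp add: sum_distrib_left mult_ac)
    also have "\<dots> = (\<Sum>y\<in>UNIV. w y * (\<Sum>k\<in>UNIV. incidence src tgt z k * J\<^sub>y y k))"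
      by (subst sum.swap) (simp add: sum_distrib_left)
    also have "\<dots> = (\<Sum>y\<in>UNIV. (if y = z then w y else 0) - of_bool (z = x\<^sub>0) * w y)"
      by (intro sum.cong) (auto simp: J\<^sub>y)
    also have "\<dots> = w z - of_bool (z = x\<^sub>0) * (\<Sum>y\<in>UNIV. w y)"
      by (simp add: sum_subtractf sum_distrib_left)
    finally show ?thesis using w by simp
  qed
  then show thesis by (rule that)
qed

(* The weights g must form a probability vector on the edges, so the flux J is carried by
   uniform weights and a correspondingly rescaled velocity. *)
lemma transport_triple_interpolation:
  fixes src tgt :: "'e::finite \<Rightarrow> 'v::finite"
  assumes \<mu>: "\<mu> \<in> prob_vecs" and \<nu>: "\<nu> \<in> prob_vecs"
    and J: "\<And>x. (\<Sum>k\<in>UNIV. incidence src tgt x k * J k) = \<nu> x - \<mu> x"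
  shows "transport_triple src tgt \<mu> \<nu> (\<lambda>t x. \<mu> x + t * (\<nu> x - \<mu> x))
    (\<lambda>t k. real CARD('e) * J k) (\<lambda>t k. 1 / real CARD('e))"
  unfolding transport_triple_def
proof (intro conjI ballI allI AE_I2 impI)
  fix t :: real assume "t \<in> {0..1}"
  then have "0 \<le> (1 - t) * \<mu> x + t * \<nu> x" for x
    using \<mu> \<nu> unfolding prob_vecs_def by (simp add: add_nonneg_nonneg)
  moreover have "(\<Sum>x\<in>UNIV. \<mu> x + t * (\<nu> x - \<mu> x)) = 1"
    using \<mu> \<nu> unfolding prob_vecs_def by (simp add: sum.distrib sum_subtractf flip: sum_distrib_left)
  ultimately show "(\<lambda>x. \<mu> x + t * (\<nu> x - \<mu> x)) \<in> prob_vecs"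
    unfolding prob_vecs_def by (simp add: algebra_simps)
next
  fix t x
  have "(\<Sum>k\<in>UNIV. incidence src tgt x k * (real CARD('e) * J k) * (1 / real CARD('e))) = \<nu> x - \<mu> x"
    using J by simp
  then show "((\<lambda>s. \<mu> x + s * (\<nu> x - \<mu> x)) has_real_derivative
      (\<Sum>k\<in>UNIV. incidence src tgt x k * (real CARD('e) * J k) * (1 / real CARD('e)))) (at t within {0..1})"
    by (auto intro!: derivative_eq_intros)
next
  fix x
  show "abs_cont_on 0 1 (\<lambda>t. \<mu> x + t * (\<nu> x - \<mu> x))"
    using abs_cont_on_affine_fun[of 0 1 "\<mu> x" "\<nu> x - \<mu> x"] by (simp add: mult.commute)
qed (auto simp: prob_vecs_def)

lemma energy_const: "energy q (\<lambda>t. w) (\<lambda>t. p) = ennreal (\<Sum>k\<in>UNIV. p k * \<bar>w k\<bar> powr q)"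
  unfolding energy_def energy_density_def by (simp add: nn_integral_cmult_indicator)

lemma Vq_lt_top:
  fixes src tgt :: "'e::finite \<Rightarrow> 'v::finite"
  assumes "\<forall>k. src k \<noteq> tgt k" "graph_connected src tgt" "\<mu> \<in> prob_vecs" "\<nu> \<in> prob_vecs"
  shows "Vq src tgt q \<mu> \<nu> < \<infinity>"
proof -
  have "(\<Sum>x\<in>UNIV. \<nu> x - \<mu> x) = 0" using assms(3,4) unfolding prob_vecs_def by (simp add: sum_subtractf)
  then obtain J where J: "\<And>x. (\<Sum>k\<in>UNIV. incidence src tgt x k * J k) = \<nu> x - \<mu> x"
    using flux_exists[OF assms(1,2)] by blast
  have "Vq src tgt q \<mu> \<nu> \<le> action q (\<lambda>t k. real CARD('e) * J k) (\<lambda>t (k::'e). 1 / real CARD('e))"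
    by (rule Vq_le_action[OF transport_triple_interpolation[OF assms(3,4) J]])
  also have "\<dots> < \<infinity>" unfolding action_lt_top_iff energy_const by simp
  finally show ?thesis .
qed

lemma Vq_self:
  fixes src tgt :: "'e::finite \<Rightarrow> 'v::finite"
  assumes "\<mu> \<in> prob_vecs"
  shows "Vq src tgt q \<mu> \<mu> = 0"
proof -
  have "transport_triple src tgt \<mu> \<mu> (\<lambda>t x. \<mu> x + t * (\<mu> x - \<mu> x))
      (\<lambda>t k. real CARD('e) * 0) (\<lambda>t k. 1 / real CARD('e))"
    by (rule transport_triple_interpolation[OF assms assms]) simp
  then have "Vq src tgt q \<mu> \<mu> \<le> action q (\<lambda>t (k::'e). real CARD('e) * 0) (\<lambda>t k. 1 / real CARD('e))"
    by (rule Vq_le_action)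
  also have "\<dots> = 0" unfolding action_energy energy_const by simp
  finally show ?thesis by simp
qed

section \<open>Definiteness\<close>

lemma le_const_plus_powr:
  fixes c q y :: real
  assumes "c > 0" "q \<ge> 1" "y \<ge> 0"
  shows "y \<le> c + c powr (1 - q) * y powr q"
proof (cases "y \<le> c")
  case True
  then show ?thesis using assms by (simp add: add_increasing2)
next
  case False
  \<comment> \<open>for \<open>y > c\<close>: \<open>y powr q = y * y powr (q - 1) \<ge> y * c powr (q - 1)\<close>\<close>
  have "c powr (1 - q) * (y * c powr (q - 1)) \<le> c powr (1 - q) * (y * y powr (q - 1))"
    using False assms by (intro mult_left_mono powr_mono2) auto
  also have "y * y powr (q - 1) = y powr q"
    using False assms by (simp add: powr_mult_base)
  also have "c powr (1 - q) * (y * c powr (q - 1)) = y"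
    using assms by (simp add: powr_add[symmetric])
  finally show ?thesis using assms by simp
qed

lemma net_flux_le:
  assumes "p \<in> prob_vecs" "c > 0" "q \<ge> 1"
  shows "\<bar>\<Sum>k\<in>UNIV. incidence src tgt x k * w k * p k\<bar> \<le> c + c powr (1 - q) * (\<Sum>k\<in>UNIV. p k * \<bar>w k\<bar> powr q)"
proof -
  have p: "p k \<ge> 0" "(\<Sum>k\<in>UNIV. p k) = 1" for k using assms(1) unfolding prob_vecs_def by auto
  have "\<bar>\<Sum>k\<in>UNIV. incidence src tgt x k * w k * p k\<bar> \<le> (\<Sum>k\<in>UNIV. p k * \<bar>w k\<bar>)"
  proof (rule order_trans[OF sum_abs sum_mono])
    fix k
    have "\<bar>incidence src tgt x k\<bar> \<le> 1" unfolding incidence_def by simp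
    then have "p k * (\<bar>w k\<bar> * \<bar>incidence src tgt x k\<bar>) \<le> p k * \<bar>w k\<bar>"
      by (intro mult_left_mono[OF mult_right_le_one_le p(1)]) auto
    then show "\<bar>incidence src tgt x k * w k * p k\<bar> \<le> p k * \<bar>w k\<bar>"
      using p(1)[of k] by (simp add: abs_mult mult_ac)
  qed
  also have "\<dots> \<le> (\<Sum>k\<in>UNIV. p k * (c + c powr (1 - q) * \<bar>w k\<bar> powr q))"
    using le_const_plus_powr[OF assms(2,3)] p(1) by (intro sum_mono mult_left_mono) auto
  also have "\<dots> = c * (\<Sum>k\<in>UNIV. p k) + c powr (1 - q) * (\<Sum>k\<in>UNIV. p k * \<bar>w k\<bar> powr q)"
    by (simp add: distrib_left sum.distrib sum_distrib_left mult_ac)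
  also have "\<dots> = c + c powr (1 - q) * (\<Sum>k\<in>UNIV. p k * \<bar>w k\<bar> powr q)"
    using p(2) by simp
  finally show ?thesis .
qed

lemma transport_triple_mass_change:
  assumes tt: "transport_triple src tgt \<mu> \<nu> f v g" and "q \<ge> 1" "a > 0" "action q v g \<le> ennreal a"
  shows "\<bar>\<nu> x - \<mu> x\<bar> \<le> 2 * a"
proof -
  have "energy q v g \<le> ennreal (a powr q)"
    using assms(2-4) action_le_ennreal_iff[of q a v g] by simp
  then have "energy q v g < \<infinity>" and E_le: "enn2real (energy q v g) \<le> a powr q"
    by (auto intro: order.strict_trans1 enn2real_leI)
  have "energy_density q v g \<in> borel_measurable borel"
    using tt by (intro energy_density_measurable transport_triple_velocity_measurable transport_triple_weight_measurable)
  then have "(energy_density q v g has_integral enn2real (energy q v g)) {0..1}"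
    using transport_triple_weight_prob[OF tt] \<open>energy q v g < \<infinity>\<close> by (rule energy_density_has_integral)
  then have H_int: "((\<lambda>t. a + a powr (1 - q) * energy_density q v g t) has_integral
      a + a powr (1 - q) * enn2real (energy q v g)) {0..1}"
    using has_integral_const_real[of a 0 1] by (intro has_integral_add has_integral_mult_right) auto
  obtain N where N: "N \<in> null_sets lborel" and der: "\<And>t. t \<in> {0..1} - N \<Longrightarrow>
      ((\<lambda>s. f s x) has_real_derivative (\<Sum>k\<in>UNIV. incidence src tgt x k * v t k * g t k)) (at t within {0..1})"
    using transport_triple_derivative[OF tt] by (auto elim!: AE_E3)
  have "\<bar>f 1 x - f 0 x\<bar> \<le> a + a powr (1 - q) * enn2real (energy q v g)"
  proof (rule abs_cont_on_increment_le_integral[OF _ transport_triple_abs_cont[OF tt] N der _ _ H_int])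
    show "\<bar>\<Sum>k\<in>UNIV. incidence src tgt x k * v t k * g t k\<bar> \<le> a + a powr (1 - q) * energy_density q v g t"
      if "t \<in> {0..1} - N" for t
      using net_flux_le[OF transport_triple_weight_prob[OF tt] \<open>a > 0\<close> \<open>q \<ge> 1\<close>, of t src tgt x "v t"] that
      unfolding energy_density_def by simp
    show "0 \<le> a + a powr (1 - q) * energy_density q v g t" if "t \<in> {0..1}" for t
      using energy_density_nonneg[of g t q v] transport_triple_weight_prob[OF tt that] \<open>a > 0\<close> by simp
  qed simp_all
  also have "\<dots> \<le> a + a powr (1 - q) * a powr q" using E_le by (simp add: mult_left_mono)
  also have "\<dots> = 2 * a" using \<open>a > 0\<close> by (simp add: powr_add[symmetric])
  finally show ?thesis using transport_triple_start[OF tt] transport_triple_end[OF tt] by simp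
qed

lemma Vq_eq_0_imp_eq:
  assumes "q \<ge> 1" "Vq src tgt q \<mu> \<nu> = 0"
  shows "\<mu> = \<nu>"
proof
  fix x
  have "\<bar>\<nu> x - \<mu> x\<bar> \<le> 0 + e" if "e > 0" for e
  proof -
    have "Vq src tgt q \<mu> \<nu> < ennreal (e / 2)" using assms(2) that by simp
    then obtain f v g where "transport_triple src tgt \<mu> \<nu> f v g" "action q v g < ennreal (e / 2)"
      by (rule Vq_lessE)
    then show ?thesis using transport_triple_mass_change[OF _ assms(1), of src tgt \<mu> \<nu> f v g "e / 2"] that
      by (simp add: less_imp_le)
  qed
  then have "\<bar>\<nu> x - \<mu> x\<bar> \<le> 0" by (rule field_le_epsilon)
  then show "\<mu> x = \<nu> x" by simp
qed

section \<open>Time reversal and concatenation\<close>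

lemma null_sets_lborel_affine_vimage:
  fixes c d :: real
  assumes N: "N \<in> null_sets lborel" and "c \<noteq> 0"
  shows "(\<lambda>t. d + c * t) -` N \<in> null_sets lborel"
proof -
  have [measurable]: "N \<in> sets borel" using N by auto
  have "(\<lambda>t::real. d + c * t) \<in> borel_measurable borel" by measurable
  from measurable_sets[OF this, of N] have vimage: "(\<lambda>t. d + c * t) -` N \<in> sets borel" by simp
  have "emeasure lborel N = ennreal \<bar>c\<bar> * (\<integral>\<^sup>+ t. indicator N (d + c * t) \<partial>lborel)"
    using nn_integral_real_affine[of "indicator N" c d] \<open>c \<noteq> 0\<close> by simp
  also have "(\<integral>\<^sup>+ t. indicator N (d + c * t) \<partial>lborel) = emeasure lborel ((\<lambda>t. d + c * t) -` N)"
  proof -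
    have "(\<lambda>t. indicator N (d + c * t)) = (indicator ((\<lambda>t. d + c * t) -` N) :: real \<Rightarrow> ennreal)"
      by (auto simp: indicator_def)
    then show ?thesis using vimage by simp
  qed
  finally show ?thesis using N vimage \<open>c \<noteq> 0\<close> by (simp add: null_sets_def)
qed

lemma has_real_derivative_affine_piece:
  fixes \<phi> \<psi> :: "real \<Rightarrow> real"
  assumes "(\<phi> has_real_derivative D) (at ((t - d) / c) within {0..1})" "(t - d) / c \<in> {0<..<1}" "c \<noteq> 0"
    and "open S" "t \<in> S" "\<And>s. s \<in> S \<Longrightarrow> \<psi> s = \<phi> ((s - d) / c)"
  shows "(\<psi> has_real_derivative D / c) (at t within T)"
proof -
  have "(\<phi> has_real_derivative D) (at ((t - d) / c))"
    using assms(1,2) at_within_interior[of "(t - d) / c" "{0..1}"] by simp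
  then have "((\<lambda>s. \<phi> ((s - d) / c)) has_real_derivative D * (1 / c)) (at t)"
    by (rule DERIV_chain2) (auto intro!: derivative_eq_intros simp: \<open>c \<noteq> 0\<close>)
  then have "((\<lambda>s. \<phi> ((s - d) / c)) has_real_derivative D / c) (at t)" by simp
  then have "(\<psi> has_real_derivative D / c) (at t)"
    by (rule has_field_derivative_transform_within_open[OF _ assms(4,5)]) (simp_all add: assms(6))
  then show ?thesis by (rule has_field_derivative_at_within)
qed

lemma AE_has_real_derivative_reflect:
  fixes \<phi> \<phi>' :: "real \<Rightarrow> real"
  assumes "AE t in lborel. t \<in> {0..1} \<longrightarrow> (\<phi> has_real_derivative \<phi>' t) (at t within {0..1})"
  shows "AE t in lborel. t \<in> {0..1} \<longrightarrow> ((\<lambda>t. \<phi> (1 - t)) has_real_derivative - \<phi>' (1 - t)) (at t within {0..1})"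
proof -
  obtain N where N: "N \<in> null_sets lborel"
    and der: "\<And>t. t \<in> {0..1} - N \<Longrightarrow> (\<phi> has_real_derivative \<phi>' t) (at t within {0..1})"
    using assms by (auto elim!: AE_E3)
  have "{0, 1} \<in> null_sets lborel" by (rule finite_imp_null_set_lborel) simp
  then have "{0, 1} \<union> (\<lambda>t. 1 + - 1 * t) -` N \<in> null_sets lborel"
    by (rule null_sets.Un) (rule null_sets_lborel_affine_vimage[OF N], simp)
  from AE_not_in[OF this] show ?thesis
  proof eventually_elim
    case (elim t)
    show ?case
    proof
      assume "t \<in> {0..1}"
      then have "((\<lambda>t. \<phi> (1 - t)) has_real_derivative \<phi>' (1 - t) / - 1) (at t within {0..1})"
        using elim der[of "1 - t"]
        by (intro has_real_derivative_affine_piece[where d = 1 and c = "- 1" and S = UNIV]) auto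
      then show "((\<lambda>t. \<phi> (1 - t)) has_real_derivative - \<phi>' (1 - t)) (at t within {0..1})" by simp
    qed
  qed
qed

lemma transport_triple_reverse:
  assumes tt: "transport_triple src tgt \<mu> \<nu> f v g"
  shows "transport_triple src tgt \<nu> \<mu> (\<lambda>t. f (1 - t)) (\<lambda>t k. - v (1 - t) k) (\<lambda>t. g (1 - t))"
  unfolding transport_triple_def
proof (intro conjI ballI allI)
  fix t :: real assume "t \<in> {0..1}"
  then show "f (1 - t) \<in> prob_vecs" "g (1 - t) \<in> prob_vecs"
    using transport_triple_prob[OF tt] transport_triple_weight_prob[OF tt] by auto
next
  fix x
  have "abs_cont_on (1 * 0 + - 1) (1 * 1 + - 1) (\<lambda>s. f (- s) x)"
    using abs_cont_on_reflect[OF transport_triple_abs_cont[OF tt]] by simp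
  then show "abs_cont_on 0 1 (\<lambda>t. f (1 - t) x)"
    using abs_cont_on_comp_affine[of 1 0 "- 1" 1 "\<lambda>s. f (- s) x"] by simp
next
  fix k
  note transport_triple_velocity_measurable[OF tt, measurable] transport_triple_weight_measurable[OF tt, measurable]
  show "(\<lambda>t. - v (1 - t) k) \<in> borel_measurable lborel" "(\<lambda>t. g (1 - t) k) \<in> borel_measurable lborel"
    by measurable
next
  have "AE t in lborel. t \<in> {0..1} \<longrightarrow> ((\<lambda>s. f s x) has_real_derivative
      (\<Sum>k\<in>UNIV. incidence src tgt x k * v t k * g t k)) (at t within {0..1})" for x
    using transport_triple_derivative[OF tt] by (rule eventually_mono) blast
  then have "AE t in lborel. t \<in> {0..1} \<longrightarrow> ((\<lambda>t. f (1 - t) x) has_real_derivative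
      - (\<Sum>k\<in>UNIV. incidence src tgt x k * v (1 - t) k * g (1 - t) k)) (at t within {0..1})" for x
    by (rule AE_has_real_derivative_reflect)
  then have "AE t in lborel. \<forall>x\<in>UNIV. t \<in> {0..1} \<longrightarrow> ((\<lambda>t. f (1 - t) x) has_real_derivative
      - (\<Sum>k\<in>UNIV. incidence src tgt x k * v (1 - t) k * g (1 - t) k)) (at t within {0..1})"
    by (intro AE_finite_allI) simp_all
  then show "AE t in lborel. t \<in> {0..1} \<longrightarrow> (\<forall>x. ((\<lambda>s. f (1 - s) x) has_real_derivative
      (\<Sum>k\<in>UNIV. incidence src tgt x k * - v (1 - t) k * g (1 - t) k)) (at t within {0..1}))"
    by eventually_elim (simp add: sum_negf[symmetric])
next
  show "f (1 - 0) = \<nu>" "f (1 - 1) = \<mu>"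
    using transport_triple_start[OF tt] transport_triple_end[OF tt] by simp_all
qed

lemma energy_reverse:
  assumes "\<And>k. (\<lambda>t. v t k) \<in> borel_measurable borel" "\<And>k. (\<lambda>t. g t k) \<in> borel_measurable borel"
  shows "energy q (\<lambda>t k. - v (1 - t) k) (\<lambda>t. g (1 - t)) = energy q v g"
proof -
  note energy_density_measurable[OF assms, measurable]
  have "energy q v g = (\<integral>\<^sup>+ t. ennreal (energy_density q v g (1 + - 1 * t)) * indicator {0..1} (1 + - 1 * t) \<partial>lborel)"
    unfolding energy_def by (subst nn_integral_real_affine[where c = "- 1" and t = 1]) auto
  also have "\<dots> = energy q (\<lambda>t k. - v (1 - t) k) (\<lambda>t. g (1 - t))"
    unfolding energy_def energy_density_def by (intro nn_integral_cong) (simp split: split_indicator)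
  finally show ?thesis ..
qed

lemma Vq_le_swap: "Vq src tgt q \<mu> \<nu> \<le> Vq src tgt q \<nu> \<mu>"
  unfolding Vq_def[of src tgt q \<nu> \<mu>]
proof (rule INF_greatest, clarify)
  fix f v g assume tt: "transport_triple src tgt \<nu> \<mu> f v g"
  have "Vq src tgt q \<mu> \<nu> \<le> action q (\<lambda>t k. - v (1 - t) k) (\<lambda>t. g (1 - t))"
    by (rule Vq_le_action[OF transport_triple_reverse[OF tt]])
  also have "\<dots> = action q v g"
  proof -
    have "energy q (\<lambda>t k. - v (1 - t) k) (\<lambda>t. g (1 - t)) = energy q v g"
      by (rule energy_reverse) (rule transport_triple_velocity_measurable[OF tt],
          rule transport_triple_weight_measurable[OF tt])
    then show ?thesis by (simp add: action_energy)
  qed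
  finally show "Vq src tgt q \<mu> \<nu> \<le> action q v g" .
qed

definition concat_path :: "real \<Rightarrow> (real \<Rightarrow> 'a) \<Rightarrow> (real \<Rightarrow> 'a) \<Rightarrow> real \<Rightarrow> 'a" where
  "concat_path l \<phi> \<psi> t = (if t \<le> l then \<phi> (t / l) else \<psi> ((t - l) / (1 - l)))"

lemma concat_path_apply: "concat_path l \<phi> \<psi> t x = concat_path l (\<lambda>s. \<phi> s x) (\<lambda>s. \<psi> s x) t"
  by (simp add: concat_path_def)

lemma abs_cont_on_concat_path:
  assumes "abs_cont_on 0 1 \<phi>" "abs_cont_on 0 1 \<psi>" "\<phi> 1 = \<psi> 0" and l: "0 < l" "l < 1"
  shows "abs_cont_on 0 1 (concat_path l \<phi> \<psi>)"
proof (rule abs_cont_on_join)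
  have "abs_cont_on 0 l (\<lambda>t. \<phi> (1 / l * t + 0))"
    by (rule abs_cont_on_comp_affine) (use assms(1) l in simp_all)
  then show "abs_cont_on 0 l (concat_path l \<phi> \<psi>)"
    by (rule abs_cont_on_cong) (simp add: concat_path_def)
  have "abs_cont_on l 1 (\<lambda>t. \<psi> (1 / (1 - l) * t + - l / (1 - l)))"
    by (rule abs_cont_on_comp_affine) (use assms(2) l in \<open>simp_all add: field_simps\<close>)
  then show "abs_cont_on l 1 (concat_path l \<phi> \<psi>)"
  proof (rule abs_cont_on_cong)
    fix t assume "t \<in> {l..1}"
    then show "\<psi> (1 / (1 - l) * t + - l / (1 - l)) = concat_path l \<phi> \<psi> t"
      using l assms(3) by (cases "t = l") (auto simp: concat_path_def diff_divide_distrib)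
  qed
qed (use l in auto)

lemma AE_has_real_derivative_concat_path:
  fixes \<phi> \<psi> \<phi>' \<psi>' :: "real \<Rightarrow> real"
  assumes "AE t in lborel. t \<in> {0..1} \<longrightarrow> (\<phi> has_real_derivative \<phi>' t) (at t within {0..1})"
    and "AE t in lborel. t \<in> {0..1} \<longrightarrow> (\<psi> has_real_derivative \<psi>' t) (at t within {0..1})"
    and l: "0 < l" "l < 1"
  shows "AE t in lborel. t \<in> {0..1} \<longrightarrow> (concat_path l \<phi> \<psi> has_real_derivative
    concat_path l (\<lambda>s. \<phi>' s / l) (\<lambda>s. \<psi>' s / (1 - l)) t) (at t within {0..1})"
proof -
  obtain N\<^sub>1 where N\<^sub>1: "N\<^sub>1 \<in> null_sets lborel"
    and der\<^sub>1: "\<And>t. t \<in> {0..1} - N\<^sub>1 \<Longrightarrow> (\<phi> has_real_derivative \<phi>' t) (at t within {0..1})"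
    using assms(1) by (auto elim!: AE_E3)
  obtain N\<^sub>2 where N\<^sub>2: "N\<^sub>2 \<in> null_sets lborel"
    and der\<^sub>2: "\<And>t. t \<in> {0..1} - N\<^sub>2 \<Longrightarrow> (\<psi> has_real_derivative \<psi>' t) (at t within {0..1})"
    using assms(2) by (auto elim!: AE_E3)
  have "{0, l, 1} \<in> null_sets lborel" by (rule finite_imp_null_set_lborel) simp
  moreover have "(\<lambda>t. 0 + 1 / l * t) -` N\<^sub>1 \<in> null_sets lborel"
    using l by (intro null_sets_lborel_affine_vimage N\<^sub>1) simp
  moreover have "(\<lambda>t. - l / (1 - l) + 1 / (1 - l) * t) -` N\<^sub>2 \<in> null_sets lborel"
    using l by (intro null_sets_lborel_affine_vimage N\<^sub>2) simp
  ultimately have "{0, l, 1} \<union> (\<lambda>t. 0 + 1 / l * t) -` N\<^sub>1 \<union> (\<lambda>t. - l / (1 - l) + 1 / (1 - l) * t) -` N\<^sub>2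
      \<in> null_sets lborel" by (intro null_sets.Un)
  from AE_not_in[OF this] show ?thesis
  proof eventually_elim
    case (elim t)
    show ?case
    proof
      assume "t \<in> {0..1}"
      then consider "0 < t" "t < l" | "l < t" "t < 1" using elim by fastforce
      then show "(concat_path l \<phi> \<psi> has_real_derivative concat_path l (\<lambda>s. \<phi>' s / l) (\<lambda>s. \<psi>' s / (1 - l)) t)
          (at t within {0..1})"
      proof cases
        case 1
        then have "(concat_path l \<phi> \<psi> has_real_derivative \<phi>' (t / l) / l) (at t within {0..1})"
          using elim der\<^sub>1[of "t / l"] l
          by (intro has_real_derivative_affine_piece[where d = 0 and c = l and S = "{0<..<l}"])
            (auto simp: concat_path_def)
        then show ?thesis using 1 by (simp add: concat_path_def)
      next
        case 2
        then have "(concat_path l \<phi> \<psi> has_real_derivative \<psi>' ((t - l) / (1 - l)) / (1 - l)) (at t within {0..1})"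
          using elim der\<^sub>2[of "(t - l) / (1 - l)"] l
          by (intro has_real_derivative_affine_piece[where d = l and c = "1 - l" and S = "{l<..<1}"])
            (auto simp: concat_path_def divide_simps)
        then show ?thesis using 2 by (simp add: concat_path_def)
      qed
    qed
  qed
qed

lemma transport_triple_concat:
  assumes tt\<^sub>1: "transport_triple src tgt \<mu> \<nu> f\<^sub>1 v\<^sub>1 g\<^sub>1" and tt\<^sub>2: "transport_triple src tgt \<nu> \<rho> f\<^sub>2 v\<^sub>2 g\<^sub>2"
    and l: "0 < l" "l < 1"
  shows "transport_triple src tgt \<mu> \<rho> (concat_path l f\<^sub>1 f\<^sub>2)
    (concat_path l (\<lambda>s k. v\<^sub>1 s k / l) (\<lambda>s k. v\<^sub>2 s k / (1 - l))) (concat_path l g\<^sub>1 g\<^sub>2)"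
  unfolding transport_triple_def
proof (intro conjI ballI allI)
  fix t :: real assume "t \<in> {0..1}"
  then have "t / l \<in> {0..1}" if "t \<le> l" using l that by auto
  moreover have "(t - l) / (1 - l) \<in> {0..1}" if "\<not> t \<le> l" using l that \<open>t \<in> {0..1}\<close> by auto
  ultimately show "concat_path l f\<^sub>1 f\<^sub>2 t \<in> prob_vecs" "concat_path l g\<^sub>1 g\<^sub>2 t \<in> prob_vecs"
    using transport_triple_prob[OF tt\<^sub>1] transport_triple_prob[OF tt\<^sub>2]
      transport_triple_weight_prob[OF tt\<^sub>1] transport_triple_weight_prob[OF tt\<^sub>2]
    unfolding concat_path_def by auto
next
  fix x
  show "abs_cont_on 0 1 (\<lambda>t. concat_path l f\<^sub>1 f\<^sub>2 t x)"
    unfolding concat_path_apply[where x = x]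
    using transport_triple_abs_cont[OF tt\<^sub>1] transport_triple_abs_cont[OF tt\<^sub>2] l
      transport_triple_end[OF tt\<^sub>1] transport_triple_start[OF tt\<^sub>2]
    by (intro abs_cont_on_concat_path) simp_all
next
  fix k
  note transport_triple_velocity_measurable[OF tt\<^sub>1, measurable] transport_triple_weight_measurable[OF tt\<^sub>1, measurable]
    transport_triple_velocity_measurable[OF tt\<^sub>2, measurable] transport_triple_weight_measurable[OF tt\<^sub>2, measurable]
  have "(\<lambda>t. concat_path l (\<lambda>s. v\<^sub>1 s k / l) (\<lambda>s. v\<^sub>2 s k / (1 - l)) t) \<in> borel_measurable borel"
    "(\<lambda>t. concat_path l (\<lambda>s. g\<^sub>1 s k) (\<lambda>s. g\<^sub>2 s k) t) \<in> borel_measurable borel"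
    unfolding concat_path_def by measurable
  then show "(\<lambda>t. concat_path l (\<lambda>s k. v\<^sub>1 s k / l) (\<lambda>s k. v\<^sub>2 s k / (1 - l)) t k) \<in> borel_measurable lborel"
    "(\<lambda>t. concat_path l g\<^sub>1 g\<^sub>2 t k) \<in> borel_measurable lborel"
    by (simp_all add: concat_path_apply[where x = k])
next
  let ?D\<^sub>1 = "\<lambda>t x. \<Sum>k\<in>UNIV. incidence src tgt x k * v\<^sub>1 t k * g\<^sub>1 t k"
  let ?D\<^sub>2 = "\<lambda>t x. \<Sum>k\<in>UNIV. incidence src tgt x k * v\<^sub>2 t k * g\<^sub>2 t k"
  have "AE t in lborel. t \<in> {0..1} \<longrightarrow> ((\<lambda>s. f\<^sub>1 s x) has_real_derivative ?D\<^sub>1 t x) (at t within {0..1})" for x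
    using transport_triple_derivative[OF tt\<^sub>1] by (rule eventually_mono) blast
  moreover have "AE t in lborel. t \<in> {0..1} \<longrightarrow> ((\<lambda>s. f\<^sub>2 s x) has_real_derivative ?D\<^sub>2 t x) (at t within {0..1})"
    for x using transport_triple_derivative[OF tt\<^sub>2] by (rule eventually_mono) blast
  ultimately have "AE t in lborel. t \<in> {0..1} \<longrightarrow> (concat_path l (\<lambda>s. f\<^sub>1 s x) (\<lambda>s. f\<^sub>2 s x) has_real_derivative
      concat_path l (\<lambda>s. ?D\<^sub>1 s x / l) (\<lambda>s. ?D\<^sub>2 s x / (1 - l)) t) (at t within {0..1})" for x
    using l by (intro AE_has_real_derivative_concat_path)
  then have "AE t in lborel. \<forall>x\<in>UNIV. t \<in> {0..1} \<longrightarrow> (concat_path l (\<lambda>s. f\<^sub>1 s x) (\<lambda>s. f\<^sub>2 s x)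
      has_real_derivative concat_path l (\<lambda>s. ?D\<^sub>1 s x / l) (\<lambda>s. ?D\<^sub>2 s x / (1 - l)) t) (at t within {0..1})"
    by (intro AE_finite_allI) simp_all
  then show "AE t in lborel. t \<in> {0..1} \<longrightarrow>
      (\<forall>x. ((\<lambda>s. concat_path l f\<^sub>1 f\<^sub>2 s x) has_real_derivative (\<Sum>k\<in>UNIV. incidence src tgt x k *
        concat_path l (\<lambda>s k. v\<^sub>1 s k / l) (\<lambda>s k. v\<^sub>2 s k / (1 - l)) t k * concat_path l g\<^sub>1 g\<^sub>2 t k))
        (at t within {0..1}))"
  proof eventually_elim
    case (elim t)
    have "concat_path l (\<lambda>s. ?D\<^sub>1 s x / l) (\<lambda>s. ?D\<^sub>2 s x / (1 - l)) t = (\<Sum>k\<in>UNIV. incidence src tgt x k *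
        concat_path l (\<lambda>s k. v\<^sub>1 s k / l) (\<lambda>s k. v\<^sub>2 s k / (1 - l)) t k * concat_path l g\<^sub>1 g\<^sub>2 t k)" for x
      by (simp add: concat_path_def sum_divide_distrib)
    with elim show ?case by (simp add: concat_path_apply)
  qed
next
  show "concat_path l f\<^sub>1 f\<^sub>2 0 = \<mu>" "concat_path l f\<^sub>1 f\<^sub>2 1 = \<rho>"
    using l transport_triple_start[OF tt\<^sub>1] transport_triple_end[OF tt\<^sub>2] by (simp_all add: concat_path_def)
qed

lemma energy_density_concat:
  assumes "0 < l" "l < 1"
  shows "energy_density q (concat_path l (\<lambda>s k. v\<^sub>1 s k / l) (\<lambda>s k. v\<^sub>2 s k / (1 - l))) (concat_path l g\<^sub>1 g\<^sub>2) t =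
    (if t \<le> l then energy_density q v\<^sub>1 g\<^sub>1 (t / l) / l powr q
     else energy_density q v\<^sub>2 g\<^sub>2 ((t - l) / (1 - l)) / (1 - l) powr q)"
  using assms unfolding concat_path_def energy_density_def
  by (simp add: abs_div powr_divide sum_divide_distrib)

lemma nn_integral_rescale_unit_interval:
  fixes F :: "real \<Rightarrow> real"
  assumes "c > 0" "F \<in> borel_measurable borel"
  shows "(\<integral>\<^sup>+ t. ennreal (F ((t - d) / c) / c powr q) * indicator {d..d + c} t \<partial>lborel)
    = ennreal (c powr (1 - q)) * (\<integral>\<^sup>+ s. ennreal (F s) * indicator {0..1} s \<partial>lborel)"
proof -
  note assms(2)[measurable]
  have "(\<integral>\<^sup>+ t. ennreal (F ((t - d) / c) / c powr q) * indicator {d..d + c} t \<partial>lborel)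
      = ennreal c * (\<integral>\<^sup>+ s. ennreal (F ((d + c * s - d) / c) / c powr q) * indicator {d..d + c} (d + c * s) \<partial>lborel)"
    using assms(1) by (subst nn_integral_real_affine[where c = c and t = d]) auto
  also have "(\<integral>\<^sup>+ s. ennreal (F ((d + c * s - d) / c) / c powr q) * indicator {d..d + c} (d + c * s) \<partial>lborel)
      = (\<integral>\<^sup>+ s. ennreal (c powr (- q)) * (ennreal (F s) * indicator {0..1} s) \<partial>lborel)"
  proof (intro nn_integral_cong)
    fix s :: real
    have "d + c * s \<in> {d..d + c} \<longleftrightarrow> s \<in> {0..1}"
      using assms(1) by (auto simp: zero_le_mult_iff mult_le_cancel_left1)
    moreover have "ennreal (F s / c powr q) = ennreal (c powr (- q)) * ennreal (F s)"
      by (simp add: powr_minus_divide flip: ennreal_mult')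
    ultimately show "ennreal (F ((d + c * s - d) / c) / c powr q) * indicator {d..d + c} (d + c * s)
        = ennreal (c powr (- q)) * (ennreal (F s) * indicator {0..1} s)"
      using assms(1) by (simp split: split_indicator)
  qed
  also have "\<dots> = ennreal (c powr (- q)) * (\<integral>\<^sup>+ s. ennreal (F s) * indicator {0..1} s \<partial>lborel)"
    by (rule nn_integral_cmult) simp
  finally show ?thesis
    using assms(1) by (simp add: ennreal_mult[symmetric] mult.assoc[symmetric] powr_add[symmetric] powr_mult_base)
qed

lemma energy_concat_le:
  assumes "\<And>k. (\<lambda>t. v\<^sub>1 t k) \<in> borel_measurable borel" "\<And>k. (\<lambda>t. g\<^sub>1 t k) \<in> borel_measurable borel"
    and "\<And>k. (\<lambda>t. v\<^sub>2 t k) \<in> borel_measurable borel" "\<And>k. (\<lambda>t. g\<^sub>2 t k) \<in> borel_measurable borel"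
    and l: "0 < l" "l < 1"
  shows "energy q (concat_path l (\<lambda>s k. v\<^sub>1 s k / l) (\<lambda>s k. v\<^sub>2 s k / (1 - l))) (concat_path l g\<^sub>1 g\<^sub>2)
    \<le> ennreal (l powr (1 - q)) * energy q v\<^sub>1 g\<^sub>1 + ennreal ((1 - l) powr (1 - q)) * energy q v\<^sub>2 g\<^sub>2"
proof -
  define \<Phi>\<^sub>1 where "\<Phi>\<^sub>1 = energy_density q v\<^sub>1 g\<^sub>1"
  define \<Phi>\<^sub>2 where "\<Phi>\<^sub>2 = energy_density q v\<^sub>2 g\<^sub>2"
  have \<Phi>_measurable [measurable]: "\<Phi>\<^sub>1 \<in> borel_measurable borel" "\<Phi>\<^sub>2 \<in> borel_measurable borel"
    unfolding \<Phi>\<^sub>1_def \<Phi>\<^sub>2_def using assms(1-4) by (auto intro: energy_density_measurable)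
  have "energy q (concat_path l (\<lambda>s k. v\<^sub>1 s k / l) (\<lambda>s k. v\<^sub>2 s k / (1 - l))) (concat_path l g\<^sub>1 g\<^sub>2)
      \<le> (\<integral>\<^sup>+ t. ennreal (\<Phi>\<^sub>1 ((t - 0) / l) / l powr q) * indicator {0..0 + l} t
           + ennreal (\<Phi>\<^sub>2 ((t - l) / (1 - l)) / (1 - l) powr q) * indicator {l..l + (1 - l)} t \<partial>lborel)"
    unfolding energy_def energy_density_concat[OF l] \<Phi>\<^sub>1_def \<Phi>\<^sub>2_def
    by (intro nn_integral_mono) (simp split: split_indicator)
  also have "\<dots> = (\<integral>\<^sup>+ t. ennreal (\<Phi>\<^sub>1 ((t - 0) / l) / l powr q) * indicator {0..0 + l} t \<partial>lborel)
      + (\<integral>\<^sup>+ t. ennreal (\<Phi>\<^sub>2 ((t - l) / (1 - l)) / (1 - l) powr q) * indicator {l..l + (1 - l)} t \<partial>lborel)"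
    by (rule nn_integral_add) auto
  also have "\<dots> = ennreal (l powr (1 - q)) * energy q v\<^sub>1 g\<^sub>1 + ennreal ((1 - l) powr (1 - q)) * energy q v\<^sub>2 g\<^sub>2"
    unfolding energy_def \<Phi>\<^sub>1_def[symmetric] \<Phi>\<^sub>2_def[symmetric]
    using l \<Phi>_measurable by (simp only: nn_integral_rescale_unit_interval diff_gt_0_iff_gt)
  finally show ?thesis .
qed

lemma powr_split_eq:
  fixes a b q :: real
  assumes "a > 0" "b > 0"
  shows "(a / (a + b)) powr (1 - q) * a powr q + (b / (a + b)) powr (1 - q) * b powr q = (a + b) powr q"
proof -
  have "(x / (a + b)) powr (1 - q) * x powr q = x * (a + b) powr (q - 1)" if "x > 0" for x
    using that assms by (simp add: powr_divide powr_minus_divide[of _ "1 - q", simplified] field_simps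
        flip: powr_add)
  then have "(a / (a + b)) powr (1 - q) * a powr q + (b / (a + b)) powr (1 - q) * b powr q
      = (a + b) * (a + b) powr (q - 1)" using assms by (simp add: distrib_right)
  also have "\<dots> = (a + b) powr q" using assms by (simp add: powr_mult_base)
  finally show ?thesis .
qed

lemma Vq_le_add:
  assumes tt\<^sub>1: "transport_triple src tgt \<mu> \<nu> f\<^sub>1 v\<^sub>1 g\<^sub>1" and tt\<^sub>2: "transport_triple src tgt \<nu> \<rho> f\<^sub>2 v\<^sub>2 g\<^sub>2"
    and "q \<ge> 1" "a > 0" "b > 0" "action q v\<^sub>1 g\<^sub>1 \<le> ennreal a" "action q v\<^sub>2 g\<^sub>2 \<le> ennreal b"
  shows "Vq src tgt q \<mu> \<rho> \<le> ennreal (a + b)"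
proof -
  \<comment> \<open>run the two paths one after the other, spending time proportional to their actions\<close>
  define l where "l = a / (a + b)"
  have l: "0 < l" "l < 1" and "1 - l = b / (a + b)"
    using \<open>a > 0\<close> \<open>b > 0\<close> unfolding l_def by (auto simp: field_simps)
  have E\<^sub>1: "energy q v\<^sub>1 g\<^sub>1 \<le> ennreal (a powr q)" and E\<^sub>2: "energy q v\<^sub>2 g\<^sub>2 \<le> ennreal (b powr q)"
    using assms(3-7) action_le_ennreal_iff[of q a v\<^sub>1 g\<^sub>1] action_le_ennreal_iff[of q b v\<^sub>2 g\<^sub>2] by simp_all
  have "Vq src tgt q \<mu> \<rho> \<le> action q (concat_path l (\<lambda>s k. v\<^sub>1 s k / l) (\<lambda>s k. v\<^sub>2 s k / (1 - l)))
      (concat_path l g\<^sub>1 g\<^sub>2)"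
    by (rule Vq_le_action[OF transport_triple_concat[OF tt\<^sub>1 tt\<^sub>2 l]])
  also have "\<dots> \<le> ennreal (a + b)"
  proof (subst action_le_ennreal_iff)
    have "energy q (concat_path l (\<lambda>s k. v\<^sub>1 s k / l) (\<lambda>s k. v\<^sub>2 s k / (1 - l))) (concat_path l g\<^sub>1 g\<^sub>2)
        \<le> ennreal (l powr (1 - q)) * energy q v\<^sub>1 g\<^sub>1 + ennreal ((1 - l) powr (1 - q)) * energy q v\<^sub>2 g\<^sub>2"
      using tt\<^sub>1 tt\<^sub>2 l
      by (intro energy_concat_le transport_triple_velocity_measurable transport_triple_weight_measurable)
    also have "\<dots> \<le> ennreal (l powr (1 - q)) * ennreal (a powr q) + ennreal ((1 - l) powr (1 - q)) * ennreal (b powr q)"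
      using E\<^sub>1 E\<^sub>2 by (intro add_mono mult_left_mono) auto
    also have "\<dots> = ennreal ((a + b) powr q)"
      using powr_split_eq[OF \<open>a > 0\<close> \<open>b > 0\<close>, of q] \<open>1 - l = b / (a + b)\<close>
      by (simp add: l_def ennreal_mult'[symmetric] ennreal_plus[symmetric] del: ennreal_plus)
    finally show "energy q (concat_path l (\<lambda>s k. v\<^sub>1 s k / l) (\<lambda>s k. v\<^sub>2 s k / (1 - l))) (concat_path l g\<^sub>1 g\<^sub>2)
        \<le> ennreal ((a + b) powr q)" .
  qed (use assms(3-5) in auto)
  finally show ?thesis .
qed

lemma Vq_triangle:
  assumes "q \<ge> 1" "Vq src tgt q \<mu> \<nu> < \<infinity>" "Vq src tgt q \<nu> \<rho> < \<infinity>"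
  shows "Vq src tgt q \<mu> \<rho> \<le> Vq src tgt q \<mu> \<nu> + Vq src tgt q \<nu> \<rho>"
proof (rule ennreal_le_epsilon)
  fix e :: real assume "e > 0"
  obtain x\<^sub>1 where x\<^sub>1: "Vq src tgt q \<mu> \<nu> = ennreal x\<^sub>1" "x\<^sub>1 \<ge> 0"
    using assms(2) by (cases "Vq src tgt q \<mu> \<nu>") auto
  obtain x\<^sub>2 where x\<^sub>2: "Vq src tgt q \<nu> \<rho> = ennreal x\<^sub>2" "x\<^sub>2 \<ge> 0"
    using assms(3) by (cases "Vq src tgt q \<nu> \<rho>") auto
  note x = x\<^sub>1 x\<^sub>2
  have "Vq src tgt q \<mu> \<nu> < ennreal (x\<^sub>1 + e / 2)" "Vq src tgt q \<nu> \<rho> < ennreal (x\<^sub>2 + e / 2)"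
    using x \<open>e > 0\<close> by (simp_all add: ennreal_lessI)
  then obtain f\<^sub>1 v\<^sub>1 g\<^sub>1 f\<^sub>2 v\<^sub>2 g\<^sub>2 where
    "transport_triple src tgt \<mu> \<nu> f\<^sub>1 v\<^sub>1 g\<^sub>1" "action q v\<^sub>1 g\<^sub>1 < ennreal (x\<^sub>1 + e / 2)"
    "transport_triple src tgt \<nu> \<rho> f\<^sub>2 v\<^sub>2 g\<^sub>2" "action q v\<^sub>2 g\<^sub>2 < ennreal (x\<^sub>2 + e / 2)"
    by (metis Vq_lessE)
  then have "Vq src tgt q \<mu> \<rho> \<le> ennreal ((x\<^sub>1 + e / 2) + (x\<^sub>2 + e / 2))"
    using x \<open>e > 0\<close> by (intro Vq_le_add[OF _ _ \<open>q \<ge> 1\<close>]) auto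
  also have "\<dots> = Vq src tgt q \<mu> \<nu> + Vq src tgt q \<nu> \<rho> + ennreal e"
    using x \<open>e > 0\<close> by (simp add: ennreal_plus[symmetric] del: ennreal_plus)
  finally show "Vq src tgt q \<mu> \<rho> \<le> Vq src tgt q \<mu> \<nu> + Vq src tgt q \<nu> \<rho> + ennreal e" .
qed

theorem mainTheorem10:
  fixes src tgt :: "'e::finite \<Rightarrow> 'v::finite" and q :: real
  assumes loopless: "\<forall>k. src k \<noteq> tgt k"
    and conn: "graph_connected src tgt"
    and q: "q \<ge> 1"
  shows "(\<forall>\<mu>\<in>prob_vecs. \<forall>\<nu>\<in>prob_vecs. 0 \<le> Vq src tgt q \<mu> \<nu> \<and> Vq src tgt q \<mu> \<nu> < (\<infinity>::ennreal))
       \<and> (\<forall>\<mu>\<in>prob_vecs. \<forall>\<nu>\<in>prob_vecs. Vq src tgt q \<mu> \<nu> = 0 \<longleftrightarrow> \<mu> = \<nu>)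
       \<and> (\<forall>\<mu>\<in>prob_vecs. \<forall>\<nu>\<in>prob_vecs. Vq src tgt q \<mu> \<nu> = Vq src tgt q \<nu> \<mu>)
       \<and> (\<forall>\<mu>\<in>prob_vecs. \<forall>\<nu>\<in>prob_vecs. \<forall>\<rho>\<in>prob_vecs.
            Vq src tgt q \<mu> \<rho> \<le> Vq src tgt q \<mu> \<nu> + Vq src tgt q \<nu> \<rho>)"
proof (intro conjI ballI)
  fix \<mu> \<nu> :: "'v \<Rightarrow> real" assume \<mu>: "\<mu> \<in> prob_vecs" and \<nu>: "\<nu> \<in> prob_vecs"
  show "0 \<le> Vq src tgt q \<mu> \<nu>" by simp
  show "Vq src tgt q \<mu> \<nu> < \<infinity>" using Vq_lt_top[OF loopless conn \<mu> \<nu>] .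
  show "Vq src tgt q \<mu> \<nu> = 0 \<longleftrightarrow> \<mu> = \<nu>" using Vq_eq_0_imp_eq[OF q] Vq_self[OF \<mu>] by blast
  show "Vq src tgt q \<mu> \<nu> = Vq src tgt q \<nu> \<mu>" by (intro antisym Vq_le_swap)
next
  fix \<mu> \<nu> \<rho> :: "'v \<Rightarrow> real" assume "\<mu> \<in> prob_vecs" "\<nu> \<in> prob_vecs" "\<rho> \<in> prob_vecs"
  then show "Vq src tgt q \<mu> \<rho> \<le> Vq src tgt q \<mu> \<nu> + Vq src tgt q \<nu> \<rho>"
    using Vq_triangle[OF q] Vq_lt_top[OF loopless conn] by blast
qed

end
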